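(* Consider the linear structural equation model and the quantities defined in the context. Assume that Assumption A or Assumption A$'$ holds. Then the causal direction $\mathcal{H}$ is identifiable and $\mathcal{H}=\mathcal{H}^{\circ}$.
   Context: Observations $(X_i,Y_i,Z_i,U_i)$, $i=1,\dots,n$, are i.i.d.; $X_i,Y_i\in\mathbb{R}$ are observed with finite variance, $Z_i\in\mathbb{R}^p$ is an observed vector of candidate instruments, $U_i$ is unobserved. Assume $E(X_i)=E(Y_i)=0$, $E(Z_i)=0$, and $\Sigma=E(Z_iZ_i^{T})$ invertible. The data satisfy $$Y_i=\beta_{X\to Y}X_i+\pi_Y^{T}Z_i+\xi_Y(U_i)+\zeta_i,\qquad X_i=\beta_{Y\to X}Y_i+\pi_X^{T}Z_i+\xi_X(U_i)+\eta_i,$$ with $\pi_X,\pi_Y\in\mathbb{R}^p$, mean-zero functions $\xi_Y(U_i),\xi_X(U_i)$, $Z_i$ independent of $U_i$, and $E(\zeta_i\mid\eta_i,Z_i,U_i)=E(\eta_i\mid\zeta_i,Z_i,U_i)=0$. The matrix $B=\begin{pmatrix}0&\beta_{X\to Y}\\ \beta_{Y\to X}&0\end{pmatrix}$ has spectral norm $<1$, and $(Y_i,X_i)^T=(I-B)^{-1}\{(\pi_Y^TZ_i,\pi_X^TZ_i)^T+(R_{Y,i},R_{X,i})^T\}$ where $R_{Y,i}=\xi_Y(U_i)+\zeta_i$, $R_{X,i}=\xi_X(U_i)+\eta_i$. Then $E(Y_i\mid Z_i)=\gamma_Y^TZ_i$, $E(X_i\mid Z_i)=\gamma_X^TZ_i$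 with $\gamma_Y=(\pi_Y+\beta_{X\to Y}\pi_X)/(1-\beta_{X\to Y}\beta_{Y\to X})$, $\gamma_X=(\pi_X+\beta_{Y\to X}\pi_Y)/(1-\beta_{X\to Y}\beta_{Y\to X})$. Sets: $\mathcal{V}_{X\to Y}=\{j:\pi_{X,j}\neq0,\pi_{Y,j}=0\}$, $\mathcal{V}_{Y\to X}=\{j:\pi_{Y,j}\neq0,\pi_{X,j}=0\}$, $\mathcal{V}_{pl}=\{j:\pi_{X,j}\neq0,\pi_{Y,j}\neq0\}$, $\mathcal{S}_X=\{j:\gamma_{X,j}\neq0\}$, $\mathcal{S}_Y=\{j:\gamma_{Y,j}\neq0\}$. Maxima over empty collections are $0$; $\mathbb{1}$ is the indicator. Assumption A: $|\mathcal{V}_{X\to Y}|>\max\big(\max_c|\{j\in\mathcal{V}_{pl}\cap\mathcal{S}_X:\pi_{Y,j}/\gamma_{X,j}=c\}|,\ |\mathcal{V}_{Y\to X}|\mathbb{1}(\beta_{Y\to X}\neq0),\ |\mathcal{V}_{pl}\setminus\mathcal{S}_X|\mathbb{1}(\beta_{Y\to X}\neq0)\big)$, and $\mathrm{Cov}(Y_iR_{Y,i},Z_i)\neq0$. Assumption A$'$: $|\mathcal{V}_{Y\to X}|>\max\big(\max_c|\{j\in\mathcal{V}_{pl}\cap\mathcal{S}_Y:\pi_{X,j}/\gamma_{Y,j}=c\}|,\ |\mathcal{V}_{X\to Y}|\mathbb{1}(\beta_{X\to Y}\neq0),\ |\mathcal{V}_{pl}\setminus\mathcal{S}_Y|\mathbb{1}(\beta_{X\to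 Y}\neq0)\big)$, and $\mathrm{Cov}(X_iR_{X,i},Z_i)\neq0$. Oracle PCH: for an ordered pair $(D,D')\in\{(X,Y),(Y,X)\}$ define $\mathrm{oPCH}(D,D')=(\beta^\star_{D\to D'},\beta^\star_{D'\to D},\mathcal{V}^\star_{D\to D'})$ as follows. Consider $\arg\max_{b\in\mathbb{R}}|\{j\in\mathcal{S}_D:\gamma_{D',j}/\gamma_{D,j}=b\}|$. If it has more than one element, set $\beta^\star_{D\to D'}=\infty$ and $\mathcal{V}^\star_{D\to D'}=\emptyset$ (and then $\beta^\star_{D'\to D}=\infty$). If it has a unique element $b$, set $\beta^\star_{D\to D'}=b$ and $\mathcal{V}^\star_{D\to D'}=\{j\in\mathcal{S}_D:\gamma_{D',j}/\gamma_{D,j}=b\}$; then let $\bar D'=D'-\beta^\star_{D\to D'}D$, $\Lambda=\bar D'-E(\bar D'\mid Z)$, $\theta_D=\Sigma^{-1}E(\Lambda_iD_iZ_i)$, $\theta_{D'}=\Sigma^{-1}E(\Lambda_iD'_iZ_i)$, and set $\beta^\star_{D'\to D}=(\theta_D^T\Sigma\theta_{D'})/(\theta_{D'}^T\Sigma\theta_{D'})$ if $\theta_{D'}^T\Sigma\theta_{D'}\neq0$ and $\beta^\star_{D'\to D}=\infty$ otherwise. Define $(\beta_{X\to Y,\mathrm{I}},\beta_{Y\to X,\mathrm{I}},\mathcal{V}_{X\to Y,\mathrm{I}})=\mathrm{oPCH}(X,Y)$ and $(\beta_{Y\to X,\mathrm{II}},\beta_{X\to Y,\mathrm{II}},\mathcal{V}_{Y\to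 X,\mathrm{II}})=\mathrm{oPCH}(Y,X)$, and $\mathbf{b}=(\beta_{X\to Y,\mathrm{I}},\beta_{Y\to X,\mathrm{I}},\beta_{X\to Y,\mathrm{II}},\beta_{Y\to X,\mathrm{II}})^T$. Define $(\beta^\circ_{X\to Y},\beta^\circ_{Y\to X})$ to be: $(\beta_{X\to Y,\mathrm{I}},\beta_{Y\to X,\mathrm{I}})$ if $\max(\beta_{X\to Y,\mathrm{II}},\beta_{Y\to X,\mathrm{II}})=\infty$; $(\beta_{X\to Y,\mathrm{II}},\beta_{Y\to X,\mathrm{II}})$ if $\max(\beta_{X\to Y,\mathrm{I}},\beta_{Y\to X,\mathrm{I}})=\infty$; $(\beta_{X\to Y,\mathrm{I}},\beta_{Y\to X,\mathrm{I}})$ if $|\mathcal{V}_{X\to Y,\mathrm{I}}|\ge|\mathcal{V}_{Y\to X,\mathrm{II}}|$ and $\max(\mathbf{b})<\infty$; $(\beta_{X\to Y,\mathrm{II}},\beta_{Y\to X,\mathrm{II}})$ if $|\mathcal{V}_{X\to Y,\mathrm{I}}|<|\mathcal{V}_{Y\to X,\mathrm{II}}|$ and $\max(\mathbf{b})<\infty$. True causal direction: $\mathcal{H}=2$ if $\beta_{X\to Y}\beta_{Y\to X}\neq0$; $\mathcal{H}=1$ if $\beta_{X\to Y}\neq0,\beta_{Y\to X}=0$; $\mathcal{H}=0$ if $\beta_{X\to Y}=\beta_{Y\to X}=0$; $\mathcal{H}=-1$ if $\beta_{X\to Y}=0,\beta_{Y\to X}\neq0$. Population statistic: $\mathcal{H}^\circ=2$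 if $\min_{j\le4}|\mathbf{b}_j|>0$; $\mathcal{H}^\circ=1$ if $\beta^\circ_{X\to Y}\neq0,\beta^\circ_{Y\to X}=0$; $\mathcal{H}^\circ=0$ if $\beta^\circ_{X\to Y}=\beta^\circ_{Y\to X}=0$; $\mathcal{H}^\circ=-1$ if $\beta^\circ_{X\to Y}=0,\beta^\circ_{Y\to X}\neq0$. *)

theory Defs
  imports "HOL-Probability.Probability"
begin

definition Sig :: "'a measure \<Rightarrow> ('a \<Rightarrow> real^'p) \<Rightarrow> real^'p^'p" where
  "Sig M Z = (\<chi> j k. integral\<^sup>L M (\<lambda>w. Z w $ j * Z w $ k))"

definition cexpZ :: "'a measure \<Rightarrow> ('a \<Rightarrow> real^'p) \<Rightarrow> ('a \<Rightarrow> real) \<Rightarrow> 'a \<Rightarrow> real" where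
  "cexpZ M Z f = real_cond_exp M (vimage_algebra (space M) Z borel) f"

definition supp_set :: "real^'p \<Rightarrow> 'p set" where
  "supp_set g = {j. g $ j \<noteq> 0}"

definition ratio_set :: "real^'p \<Rightarrow> real^'p \<Rightarrow> real \<Rightarrow> 'p set" where
  "ratio_set gD gD' b = {j \<in> supp_set gD. gD' $ j / gD $ j = b}"

definition mode_set :: "real^'p \<Rightarrow> real^'p \<Rightarrow> real set" where
  "mode_set gD gD' = {b. \<forall>c. card (ratio_set gD gD' c) \<le> card (ratio_set gD gD' b)}"

(* Oracle PCH: oPCH(D,D') = (beta*_{D->D'}, beta*_{D'->D}, V*_{D->D'}); infinity = PInfty *)
definition oPCH :: "'a measure \<Rightarrow> ('a \<Rightarrow> real^'p) \<Rightarrow> ('a \<Rightarrow> real) \<Rightarrow> ('a \<Rightarrow> real)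
    \<Rightarrow> real^'p \<Rightarrow> real^'p \<Rightarrow> ereal \<times> ereal \<times> 'p set" where
  "oPCH M Z D D' gD gD' =
     (if \<exists>!b. b \<in> mode_set gD gD' then
        (let b = (THE b. b \<in> mode_set gD gD');
             Dbar = (\<lambda>w. D' w - b * D w);
             Lam = (\<lambda>w. Dbar w - cexpZ M Z Dbar w);
             S = Sig M Z;
             thD = matrix_inv S *v (\<chi> j. integral\<^sup>L M (\<lambda>w. Lam w * D w * Z w $ j));
             thD' = matrix_inv S *v (\<chi> j. integral\<^sup>L M (\<lambda>w. Lam w * D' w * Z w $ j));
             den = thD' \<bullet> (S *v thD')
         in (ereal b,
             (if den \<noteq> 0 then ereal ((thD \<bullet> (S *v thD')) / den) else PInfty),
             ratio_set gD gD' b))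
      else (PInfty, PInfty, {}))"

(* (beta^circ_{X->Y}, beta^circ_{Y->X}); the first listed applicable case is taken *)
definition beta_circ :: "ereal \<Rightarrow> ereal \<Rightarrow> 'p set \<Rightarrow> ereal \<Rightarrow> ereal \<Rightarrow> 'p set \<Rightarrow> ereal \<times> ereal" where
  "beta_circ bXY_I bYX_I V_I bXY_II bYX_II V_II =
     (if max bXY_II bYX_II = \<infinity> then (bXY_I, bYX_I)
      else if max bXY_I bYX_I = \<infinity> then (bXY_II, bYX_II)
      else if card V_I \<ge> card V_II then (bXY_I, bYX_I)
      else (bXY_II, bYX_II))"

(* Population statistic H^circ; None if no case of the definition applies *)
definition H_circ :: "ereal \<Rightarrow> ereal \<Rightarrow> ereal \<Rightarrow> ereal \<Rightarrow> 'p set \<Rightarrow> 'p set \<Rightarrow> int option" where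
  "H_circ bXY_I bYX_I bXY_II bYX_II V_I V_II =
     (let (bX, bY) = beta_circ bXY_I bYX_I V_I bXY_II bYX_II V_II in
      if Min {\<bar>bXY_I\<bar>, \<bar>bYX_I\<bar>, \<bar>bXY_II\<bar>, \<bar>bYX_II\<bar>} > 0 then Some 2
      else if bX \<noteq> 0 \<and> bY = 0 then Some 1
      else if bX = 0 \<and> bY = 0 then Some 0
      else if bX = 0 \<and> bY \<noteq> 0 then Some (-1)
      else None)"

definition H_true :: "real \<Rightarrow> real \<Rightarrow> int" where
  "H_true bXY bYX =
     (if bXY * bYX \<noteq> 0 then 2
      else if bXY \<noteq> 0 \<and> bYX = 0 then 1
      else if bXY = 0 \<and> bYX = 0 then 0
      else -1)"

definition Bmat :: "real \<Rightarrow> real \<Rightarrow> real^2^2" where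
  "Bmat bXY bYX = vector [vector [0, bXY], vector [bYX, 0]]"

(* gamma_Y and gamma_X from the reduced form *)
definition gammaY :: "real \<Rightarrow> real \<Rightarrow> real^'p \<Rightarrow> real^'p \<Rightarrow> real^'p" where
  "gammaY bXY bYX piX piY = (1 / (1 - bXY * bYX)) *\<^sub>R (piY + bXY *\<^sub>R piX)"
definition gammaX :: "real \<Rightarrow> real \<Rightarrow> real^'p \<Rightarrow> real^'p \<Rightarrow> real^'p" where
  "gammaX bXY bYX piX piY = (1 / (1 - bXY * bYX)) *\<^sub>R (piX + bYX *\<^sub>R piY)"

(* Assumption A (with roles of (X,Y) parameters); A' is obtained by swapping *)
definition assmA :: "'a measure \<Rightarrow> ('a \<Rightarrow> real^'p) \<Rightarrow> ('a \<Rightarrow> real) \<Rightarrow> ('a \<Rightarrow> real)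
    \<Rightarrow> real \<Rightarrow> real^'p \<Rightarrow> real^'p \<Rightarrow> real^'p \<Rightarrow> bool" where
  "assmA M Z Y RY bYX piX piY gX \<longleftrightarrow>
     (let VXY = {j. piX $ j \<noteq> 0 \<and> piY $ j = 0};
          VYX = {j. piY $ j \<noteq> 0 \<and> piX $ j = 0};
          Vpl = {j. piX $ j \<noteq> 0 \<and> piY $ j \<noteq> 0};
          SX = supp_set gX
      in card VXY > max (Max (range (\<lambda>c. card {j \<in> Vpl \<inter> SX. piY $ j / gX $ j = c})))
                        (max (if bYX \<noteq> 0 then card VYX else 0)
                             (if bYX \<noteq> 0 then card (Vpl - SX) else 0))
       \<and> (\<chi> j. integral\<^sup>L M (\<lambda>w. Y w * RY w * Z w $ j)
                 - integral\<^sup>L M (\<lambda>w. Y w * RY w) * integral\<^sup>L M (\<lambda>w. Z w $ j)) \<noteq> 0)"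

end

theory Submission
  imports Defs
begin

(* Write R_Y = xi_Y(U) + zeta and R_X = xi_X(U) + eta.  Solving the structural equations gives,
   coordinatewise, gamma_Y = beta_{X->Y} gamma_X + pi_Y and gamma_X = beta_{Y->X} gamma_Y + pi_X.  Hence
   the ratio gamma_{Y,j}/gamma_{X,j} equals beta_{X->Y} exactly on V_{X->Y}, and the counting part of
   Assumption A makes beta_{X->Y} the unique mode; in the reverse direction every ratio shared by at
   least |V_{X->Y}| coordinates is either beta_{Y->X} = 0 or 1/beta_{X->Y}.

   For the second coefficient: Y - b X minus its projection (gamma_Y - b gamma_X)^T Z on the
   instruments is a fixed combination of R_Y and R_X.  The conditional centring of zeta and eta and
   the independence of Z and U give E(R_Y (X - beta_{Y->X} Y) Z) = 0 = E(R_X (Y - beta_{X->Y} X) Z),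
   so the two moment vectors of the oracle are proportional: at b = beta_{X->Y} the Sigma-regression
   coefficient is beta_{Y->X} (its denominator is nonzero because Cov(Y R_Y, Z) <> 0), and at
   b = 1/beta_{Y->X} it is nonzero.  Feeding both runs into H-circ gives the true direction;
   Assumption A' is the mirror image under exchanging X and Y. *)

lemma sigma_finite_subalgebra_vimage_algebra:
  assumes "finite_measure M" "f \<in> measurable M N"
  shows "sigma_finite_subalgebra M (vimage_algebra (space M) f N)"
proof -
  interpret finite_measure M by fact
  have fs: "f \<in> space M \<rightarrow> space N" using assms(2) by (simp add: measurable_def)
  have "subalgebra M (vimage_algebra (space M) f N)"
    unfolding subalgebra_def using assms(2) by (auto simp: sets_vimage_algebra2[OF fs])
  then have "finite_measure_subalgebra M (vimage_algebra (space M) f N)"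
    by unfold_locales
  then show ?thesis by (rule finite_measure_subalgebra_is_sigma_finite)
qed

lemma measurable_vimage_algebra_comp:
  assumes "f \<in> measurable M N" "g \<in> borel_measurable N"
  shows "(\<lambda>x. g (f x)) \<in> borel_measurable (vimage_algebra (space M) f N)"
proof -
  have fs: "f \<in> space M \<rightarrow> space N" using assms(1) by (simp add: measurable_def)
  show ?thesis
    using measurable_comp[OF measurable_vimage_algebra1[OF fs] assms(2)] by (simp add: comp_def)
qed

lemma integral_mult_real_cond_exp_zero:
  assumes "sigma_finite_subalgebra M F"
    and e: "integrable M e" and ce: "AE w in M. real_cond_exp M F e w = 0"
    and kF: "k \<in> borel_measurable F" and ke: "integrable M (\<lambda>w. k w * e w)"
  shows "(\<integral>w. k w * e w \<partial>M) = 0"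
proof -
  interpret sigma_finite_subalgebra M F by fact
  have "(\<integral>w. k w * e w \<partial>M) = (\<integral>w. k w * real_cond_exp M F e w \<partial>M)"
    using real_cond_exp_intg(2)[OF ke kF] e by simp
  also have "\<dots> = (\<integral>w. 0 \<partial>M)"
    using measurable_from_subalg[OF subalg kF] by (intro integral_cong_AE) (use ce in auto)
  finally show ?thesis by simp
qed

lemma integrable_if_truncations_bounded:
  fixes a h :: "'a \<Rightarrow> real"
  assumes [measurable]: "a \<in> borel_measurable M" "h \<in> borel_measurable M"
    and bound: "\<And>n. (\<integral>\<^sup>+w. ennreal (if \<bar>h w\<bar> \<le> real n then \<bar>a w\<bar> else 0) \<partial>M) \<le> ennreal C"
  shows "integrable M a"
proof (rule integrableI_bounded)
  have "(\<integral>\<^sup>+w. ennreal \<bar>a w\<bar> \<partial>M)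
      = (\<integral>\<^sup>+w. (SUP n. ennreal (if \<bar>h w\<bar> \<le> real n then \<bar>a w\<bar> else 0)) \<partial>M)"
  proof (rule nn_integral_cong)
    fix w
    obtain n where n: "\<bar>h w\<bar> \<le> real n" using real_arch_simple by blast
    show "ennreal \<bar>a w\<bar> = (SUP n. ennreal (if \<bar>h w\<bar> \<le> real n then \<bar>a w\<bar> else 0))"
    proof (rule antisym)
      show "ennreal \<bar>a w\<bar> \<le> (SUP n. ennreal (if \<bar>h w\<bar> \<le> real n then \<bar>a w\<bar> else 0))"
        using n by (intro SUP_upper2[of n]) auto
    qed (rule SUP_least, simp)
  qed
  also have "\<dots> = (SUP n. \<integral>\<^sup>+w. ennreal (if \<bar>h w\<bar> \<le> real n then \<bar>a w\<bar> else 0) \<partial>M)"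
    by (rule nn_integral_monotone_convergence_SUP)
      (auto simp: incseq_def le_fun_def intro!: ennreal_leI)
  also have "\<dots> \<le> ennreal C" by (rule SUP_least) (rule bound)
  finally show "(\<integral>\<^sup>+w. ennreal (norm (a w)) \<partial>M) < \<infinity>"
    by (simp add: le_less_trans)
qed measurable

text \<open>No integrability of \<open>h * e\<close> is assumed: it is obtained by testing against the bounded
  \<open>F\<close>-measurable truncations \<open>sgn a \<cdot> 1{|h| \<le> n}\<close>.\<close>

lemma integral_mult_cond_exp_zero:
  fixes a h e :: "'a \<Rightarrow> real"
  assumes sfs: "sigma_finite_subalgebra M F"
    and e: "integrable M e" and ce: "AE w in M. real_cond_exp M F e w = 0"
    and aF: "a \<in> borel_measurable F" and hF: "h \<in> borel_measurable F"
    and int: "integrable M (\<lambda>w. a w + h w * e w)"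
  shows "integrable M a" "integrable M (\<lambda>w. h w * e w)" "(\<integral>w. h w * e w \<partial>M) = 0"
proof -
  interpret sigma_finite_subalgebra M F by fact
  have [measurable]: "a \<in> borel_measurable M" "h \<in> borel_measurable M" "e \<in> borel_measurable M"
    using measurable_from_subalg[OF subalg aF] measurable_from_subalg[OF subalg hF] e by auto
  define trunc where "trunc n w = (if \<bar>h w\<bar> \<le> real n then sgn (a w) else 0)" for n w
  have truncF: "(\<lambda>w. trunc n w * h w) \<in> borel_measurable F" for n
    unfolding trunc_def using aF hF by measurable
  have [measurable]: "trunc n \<in> borel_measurable M" for n unfolding trunc_def by measurable
  have int_trunc_e: "integrable M (\<lambda>w. (trunc n w * h w) * e w)" for n
  proof (rule Bochner_Integration.integrable_bound[where f="\<lambda>w. real n * e w"])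
    show "AE w in M. norm (trunc n w * h w * e w) \<le> norm (real n * e w)"
      by (auto simp: trunc_def sgn_real_def abs_mult intro!: mult_right_mono)
  qed (use e in auto)
  have int_trunc: "integrable M (\<lambda>w. trunc n w * (a w + h w * e w))" for n
  proof (rule Bochner_Integration.integrable_bound[where f="\<lambda>w. a w + h w * e w"])
    show "AE w in M. norm (trunc n w * (a w + h w * e w)) \<le> norm (a w + h w * e w)"
      by (auto simp: trunc_def sgn_real_def abs_mult)
  qed (use int in auto)
  have trunc_a: "trunc n w * a w = (if \<bar>h w\<bar> \<le> real n then \<bar>a w\<bar> else 0)" for n w
    by (simp add: trunc_def abs_if sgn_real_def)
  have decomp: "trunc n w * a w = trunc n w * (a w + h w * e w) - (trunc n w * h w) * e w" for n w
    by (simp add: algebra_simps)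
  have int_trunc_a: "integrable M (\<lambda>w. trunc n w * a w)" for n
    unfolding decomp using int_trunc int_trunc_e by auto
  have bound: "(\<integral>\<^sup>+w. ennreal (if \<bar>h w\<bar> \<le> real n then \<bar>a w\<bar> else 0) \<partial>M)
      \<le> ennreal (\<integral>w. \<bar>a w + h w * e w\<bar> \<partial>M)" for n
  proof -
    have "(\<integral>w. trunc n w * a w \<partial>M) = (\<integral>w. trunc n w * (a w + h w * e w) \<partial>M)"
      unfolding decomp
      using int_trunc int_trunc_e integral_mult_real_cond_exp_zero[OF sfs e ce truncF int_trunc_e]
      by simp
    also have "\<dots> \<le> (\<integral>w. \<bar>a w + h w * e w\<bar> \<partial>M)"
      using int_trunc int by (intro integral_mono) (auto simp: trunc_def sgn_real_def)
    finally have "(\<integral>w. trunc n w * a w \<partial>M) \<le> (\<integral>w. \<bar>a w + h w * e w\<bar> \<partial>M)" .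
    moreover have "(\<integral>\<^sup>+w. ennreal (trunc n w * a w) \<partial>M) = ennreal (\<integral>w. trunc n w * a w \<partial>M)"
      by (rule nn_integral_eq_integral[OF int_trunc_a]) (simp add: trunc_a)
    ultimately show ?thesis by (simp add: trunc_a[symmetric] ennreal_leI)
  qed
  show ia: "integrable M a" by (rule integrable_if_truncations_bounded[OF _ _ bound]) measurable
  have "integrable M (\<lambda>w. (a w + h w * e w) - a w)"
    using Bochner_Integration.integrable_diff[OF int ia] .
  then show ihe: "integrable M (\<lambda>w. h w * e w)" by simp
  show "(\<integral>w. h w * e w \<partial>M) = 0" by (rule integral_mult_real_cond_exp_zero[OF sfs e ce hF ihe])
qed

lemma borel_measurable_vec_nth_comp[measurable (raw)]:
  "f \<in> borel_measurable M \<Longrightarrow> (\<lambda>x. (f x :: real^'n) $ j) \<in> borel_measurable M"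
  using measurable_compose[OF _ borel_measurable_nth] by blast

lemma abs_mult_le_sum_squares: "\<bar>a * b\<bar> \<le> a\<^sup>2 + (b::real)\<^sup>2"
proof -
  have "0 \<le> (\<bar>a\<bar> - \<bar>b\<bar>)\<^sup>2" by simp
  then have "2 * (\<bar>a\<bar> * \<bar>b\<bar>) \<le> a\<^sup>2 + b\<^sup>2" by (simp add: power2_eq_square algebra_simps)
  moreover have "0 \<le> \<bar>a\<bar> * \<bar>b\<bar>" by simp
  ultimately show ?thesis unfolding abs_mult by linarith
qed

lemma matrix_vector_mul_inv:
  assumes "invertible A"
  shows "A *v (matrix_inv A *v v) = v" "matrix_inv A *v (A *v v) = v"
proof -
  have "\<exists>A'. A ** A' = mat 1 \<and> A' ** A = mat 1" using assms unfolding invertible_def .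
  then have "A ** matrix_inv A = mat 1 \<and> matrix_inv A ** A = mat 1"
    unfolding matrix_inv_def by (rule someI_ex)
  then show "A *v (matrix_inv A *v v) = v" "matrix_inv A *v (A *v v) = v"
    by (simp_all add: matrix_vector_mul_assoc)
qed

text \<open>The oracle's coefficient \<open>\<beta>*_{D'\<rightarrow>D}\<close> as a function of the moment vectors
  \<open>E(\<Lambda> D Z)\<close> and \<open>E(\<Lambda> D' Z)\<close>.\<close>

definition lsq_coef :: "real^'p^'p \<Rightarrow> real^'p \<Rightarrow> real^'p \<Rightarrow> ereal" where
  "lsq_coef S vD vD' = (let thD = matrix_inv S *v vD; thD' = matrix_inv S *v vD'; den = thD' \<bullet> (S *v thD')
     in if den \<noteq> 0 then ereal (thD \<bullet> (S *v thD') / den) else PInfty)"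

lemma lsq_coef_proportional:
  assumes S: "invertible S" and definite: "\<And>t. t \<bullet> (S *v t) = 0 \<Longrightarrow> t = 0"
    and vD: "vD = k *\<^sub>R vD'"
  shows "lsq_coef S vD vD' = (if vD' \<noteq> 0 then ereal k else PInfty)"
proof -
  let ?t = "matrix_inv S *v vD'"
  have tD: "matrix_inv S *v vD = k *\<^sub>R ?t" unfolding vD by (simp add: matrix_vector_mult_scaleR)
  have "?t \<bullet> (S *v ?t) = 0 \<longleftrightarrow> vD' = 0"
    using definite[of ?t] matrix_vector_mul_inv(1)[OF S, of vD'] by auto
  then show ?thesis unfolding lsq_coef_def Let_def tD by simp
qed

lemma lsq_coef_inverse_proportional:
  assumes S: "invertible S" and vD': "vD' = k *\<^sub>R vD"
  shows "lsq_coef S vD vD' \<noteq> 0 \<and> (lsq_coef S vD vD' \<noteq> PInfty \<longrightarrow> k \<noteq> 0)"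
proof -
  let ?t = "matrix_inv S *v vD"
  have tD': "matrix_inv S *v vD' = k *\<^sub>R ?t" unfolding vD' by (simp add: matrix_vector_mult_scaleR)
  have St: "S *v (k *\<^sub>R ?t) = k *\<^sub>R vD"
    by (simp add: matrix_vector_mult_scaleR matrix_vector_mul_inv(1)[OF S])
  show ?thesis
  proof (cases "(k *\<^sub>R ?t) \<bullet> (S *v (k *\<^sub>R ?t)) = 0")
    case True then show ?thesis unfolding lsq_coef_def Let_def tD' by simp
  next
    case False
    then have "k \<noteq> 0" "?t \<bullet> vD \<noteq> 0" unfolding St by auto
    then show ?thesis using False unfolding lsq_coef_def Let_def tD' St by simp
  qed
qed

lemma det_I_minus_Bmat_nonzero:
  assumes "onorm (\<lambda>v. Bmat bXY bYX *v v) < 1"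
  shows "bXY * bYX \<noteq> 1"
proof -
  let ?f = "\<lambda>v. Bmat bXY bYX *v v"
  have bl: "bounded_linear ?f" by (simp add: matrix_vector_mul_bounded_linear)
  have e1: "(Bmat bXY bYX *v axis 2 1) $ 1 = bXY"
    by (simp add: Bmat_def matrix_vector_mult_def axis_def if_distrib[of "\<lambda>x. _ * x"] cong: if_cong)
  have e2: "(Bmat bXY bYX *v axis 1 1) $ 2 = bYX"
    by (simp add: Bmat_def matrix_vector_mult_def axis_def if_distrib[of "\<lambda>x. _ * x"] cong: if_cong)
  have "\<bar>bXY\<bar> \<le> onorm ?f"
    using component_le_norm_cart[of "Bmat bXY bYX *v axis 2 1" 1] onorm[OF bl, of "axis 2 1"] e1
    by simp
  moreover have "\<bar>bYX\<bar> \<le> onorm ?f"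
    using component_le_norm_cart[of "Bmat bXY bYX *v axis 1 1" 2] onorm[OF bl, of "axis 1 1"] e2
    by simp
  ultimately have "\<bar>bXY\<bar> < 1" "\<bar>bYX\<bar> < 1" using assms by linarith+
  then have "\<bar>bXY * bYX\<bar> < 1"
    using abs_mult_less[of bXY 1 bYX 1] by (simp add: abs_mult)
  then show ?thesis by auto
qed

lemma gammaY_nth:
  assumes "bXY * bYX \<noteq> 1"
  shows "gammaY bXY bYX piX piY $ j = bXY * gammaX bXY bYX piX piY $ j + piY $ j"
proof -
  have "1 - bXY * bYX \<noteq> 0" using assms by simp
  then have "(piY $ j + bXY * piX $ j) / (1 - bXY * bYX)
      = bXY * ((piX $ j + bYX * piY $ j) / (1 - bXY * bYX)) + piY $ j"
    by (simp add: divide_simps) algebra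
  then show ?thesis by (simp add: gammaX_def gammaY_def)
qed

lemma gammaX_nth:
  assumes "bXY * bYX \<noteq> 1"
  shows "gammaX bXY bYX piX piY $ j = bYX * gammaY bXY bYX piX piY $ j + piX $ j"
proof -
  have "1 - bXY * bYX \<noteq> 0" using assms by simp
  then have "(piX $ j + bYX * piY $ j) / (1 - bXY * bYX)
      = bYX * ((piY $ j + bXY * piX $ j) / (1 - bXY * bYX)) + piX $ j"
    by (simp add: divide_simps) algebra
  then show ?thesis by (simp add: gammaX_def gammaY_def)
qed

section \<open>Counting coordinate ratios\<close>

definition card_condition :: "real \<Rightarrow> real^'p \<Rightarrow> real^'p \<Rightarrow> real^'p \<Rightarrow> bool" where
  "card_condition bYX piX piY gX \<longleftrightarrow>
     (let VXY = {j. piX $ j \<noteq> 0 \<and> piY $ j = 0};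
          VYX = {j. piY $ j \<noteq> 0 \<and> piX $ j = 0};
          Vpl = {j. piX $ j \<noteq> 0 \<and> piY $ j \<noteq> 0};
          SX = supp_set gX
      in card VXY > max (Max (range (\<lambda>c. card {j \<in> Vpl \<inter> SX. piY $ j / gX $ j = c})))
                        (max (if bYX \<noteq> 0 then card VYX else 0)
                             (if bYX \<noteq> 0 then card (Vpl - SX) else 0)))"

lemma assmA_iff:
  "assmA M Z Y RY bYX piX piY gX \<longleftrightarrow> card_condition bYX piX piY gX \<and>
     (\<chi> j. integral\<^sup>L M (\<lambda>w. Y w * RY w * Z w $ j)
        - integral\<^sup>L M (\<lambda>w. Y w * RY w) * integral\<^sup>L M (\<lambda>w. Z w $ j)) \<noteq> 0"
  unfolding assmA_def card_condition_def Let_def by blast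

lemma mem_ratio_set: "j \<in> ratio_set g h c \<longleftrightarrow> g $ j \<noteq> 0 \<and> h $ j / g $ j = c"
  by (simp add: ratio_set_def supp_set_def)

lemma unique_mode:
  assumes "\<And>c. card (ratio_set g h c) \<le> card (ratio_set g h b)"
    and "\<And>c. card (ratio_set g h b) \<le> card (ratio_set g h c) \<Longrightarrow> c = b"
  shows "(\<exists>!c. c \<in> mode_set g h) \<and> (THE c. c \<in> mode_set g h) = b"
proof -
  have "b \<in> mode_set g h" using assms(1) unfolding mode_set_def by simp
  moreover have "c = b" if "c \<in> mode_set g h" for c
    using that assms(2) unfolding mode_set_def by simp
  ultimately show ?thesis by (metis the_equality)
qed

locale ratio_counting =
  fixes bXY bYX :: real and piX piY gX gY :: "real^'p"
  assumes det_nz: "bXY * bYX \<noteq> 1"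
    and gY_nth: "\<And>j. gY $ j = bXY * gX $ j + piY $ j"
    and gX_nth: "\<And>j. gX $ j = bYX * gY $ j + piX $ j"
    and card_cond: "card_condition bYX piX piY gX"
begin

abbreviation "VXY \<equiv> {j. piX $ j \<noteq> 0 \<and> piY $ j = 0}"
abbreviation "VYX \<equiv> {j. piY $ j \<noteq> 0 \<and> piX $ j = 0}"
abbreviation "Vpl \<equiv> {j. piX $ j \<noteq> 0 \<and> piY $ j \<noteq> 0}"

lemma gamma_zero_if_pi_zero:
  assumes "piX $ j = 0" "piY $ j = 0"
  shows "gX $ j = 0 \<and> gY $ j = 0"
proof -
  have "gX $ j * (1 - bXY * bYX) = 0" using gX_nth[of j] gY_nth[of j] assms by algebra
  then have "gX $ j = 0" using det_nz by simp
  then show ?thesis using gY_nth[of j] assms by simp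
qed

lemma gX_nonzero_on_VXY:
  assumes "j \<in> VXY"
  shows "gX $ j \<noteq> 0"
proof
  assume gX0: "gX $ j = 0"
  then have "gY $ j = 0" using gY_nth[of j] assms by simp
  then show False using gX_nth[of j] gX0 assms by simp
qed

lemma card_pleiotropic_ratio_less: "card {j \<in> Vpl \<inter> supp_set gX. piY $ j / gX $ j = c} < card VXY"
proof -
  let ?n = "\<lambda>c. card {j \<in> Vpl \<inter> supp_set gX. piY $ j / gX $ j = c}"
  have "finite (range ?n)"
    by (rule finite_subset[of _ "{..card (UNIV::'p set)}"]) (auto intro!: card_mono)
  then have "?n c \<le> Max (range ?n)" by (intro Max_ge) simp_all
  then show ?thesis using card_cond unfolding card_condition_def Let_def by linarith
qed

lemma card_VYX_less: "bYX \<noteq> 0 \<Longrightarrow> card VYX < card VXY"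
  using card_cond unfolding card_condition_def Let_def by simp

lemma card_Vpl_unsupported_less: "bYX \<noteq> 0 \<Longrightarrow> card (Vpl - supp_set gX) < card VXY"
  using card_cond unfolding card_condition_def Let_def by simp

lemma ratio_set_XY_bXY: "ratio_set gX gY bXY = VXY"
proof (intro set_eqI iffI)
  fix j assume "j \<in> ratio_set gX gY bXY"
  then have "gX $ j \<noteq> 0" "gY $ j = bXY * gX $ j" by (auto simp: mem_ratio_set field_simps)
  then show "j \<in> VXY" using gY_nth[of j] gamma_zero_if_pi_zero[of j] by auto
next
  fix j assume "j \<in> VXY"
  then show "j \<in> ratio_set gX gY bXY"
    using gX_nonzero_on_VXY gY_nth[of j] by (simp add: mem_ratio_set)
qed

lemma card_ratio_set_XY_less:
  assumes c: "c \<noteq> bXY"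
  shows "card (ratio_set gX gY c) < card VXY"
proof (cases "\<exists>j \<in> ratio_set gX gY c. piX $ j = 0")
  case True
  then obtain j where j: "gX $ j \<noteq> 0" "gY $ j / gX $ j = c" "piX $ j = 0"
    by (auto simp: mem_ratio_set)
  then have bY: "bYX \<noteq> 0" and c: "c = 1 / bYX"
    using gX_nth[of j] by (auto simp: field_simps)
  have "ratio_set gX gY c \<subseteq> VYX"
  proof
    fix k assume "k \<in> ratio_set gX gY c"
    then have "gX $ k \<noteq> 0" "gX $ k = bYX * gY $ k" using c bY by (auto simp: mem_ratio_set field_simps)
    then show "k \<in> VYX" using gX_nth[of k] gamma_zero_if_pi_zero[of k] by auto
  qed
  then have "card (ratio_set gX gY c) \<le> card VYX" by (intro card_mono) simp_all
  then show ?thesis using card_VYX_less[OF bY] by linarith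
next
  case False
  have "ratio_set gX gY c \<subseteq> {j \<in> Vpl \<inter> supp_set gX. piY $ j / gX $ j = c - bXY}"
  proof
    fix k assume k: "k \<in> ratio_set gX gY c"
    then have "gX $ k \<noteq> 0" "piY $ k / gX $ k = c - bXY"
      using gY_nth[of k] by (auto simp: mem_ratio_set field_simps)
    then show "k \<in> {j \<in> Vpl \<inter> supp_set gX. piY $ j / gX $ j = c - bXY}"
      using False k c by (auto simp: supp_set_def)
  qed
  then have "card (ratio_set gX gY c) \<le> card {j \<in> Vpl \<inter> supp_set gX. piY $ j / gX $ j = c - bXY}"
    by (intro card_mono) simp_all
  then show ?thesis using card_pleiotropic_ratio_less[of "c - bXY"] by linarith
qed

lemma mode_set_XY: "(\<exists>!b. b \<in> mode_set gX gY) \<and> (THE b. b \<in> mode_set gX gY) = bXY"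
proof (rule unique_mode)
  show "card (ratio_set gX gY c) \<le> card (ratio_set gX gY bXY)" for c
    using card_ratio_set_XY_less[of c] ratio_set_XY_bXY by (cases "c = bXY") auto
  show "c = bXY" if "card (ratio_set gX gY bXY) \<le> card (ratio_set gX gY c)" for c
    using that card_ratio_set_XY_less[of c] ratio_set_XY_bXY by (cases "c = bXY") auto
qed

lemma ratio_set_YX_bYX: "ratio_set gY gX bYX \<subseteq> VYX"
proof
  fix k assume "k \<in> ratio_set gY gX bYX"
  then have "gY $ k \<noteq> 0" "gX $ k = bYX * gY $ k" by (auto simp: mem_ratio_set field_simps)
  then show "k \<in> VYX" using gX_nth[of k] gamma_zero_if_pi_zero[of k] by auto
qed

lemma ratio_set_YX_pleiotropic:
  assumes c: "c \<noteq> bYX" and noY: "\<forall>k \<in> ratio_set gY gX c. piY $ k \<noteq> 0"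
  shows "card (ratio_set gY gX c) < card VXY"
proof -
  have Vpl: "k \<in> Vpl" if "k \<in> ratio_set gY gX c" for k
    using that noY c gX_nth[of k] by (auto simp: mem_ratio_set field_simps)
  show ?thesis
  proof (cases "c = 0")
    case True
    have "ratio_set gY gX c \<subseteq> Vpl - supp_set gX"
      using Vpl True by (auto simp: mem_ratio_set supp_set_def)
    then have "card (ratio_set gY gX c) \<le> card (Vpl - supp_set gX)" by (intro card_mono) simp_all
    then show ?thesis using card_Vpl_unsupported_less c True by fastforce
  next
    case False
    have "ratio_set gY gX c \<subseteq> {j \<in> Vpl \<inter> supp_set gX. piY $ j / gX $ j = 1 / c - bXY}"
    proof
      fix k assume k: "k \<in> ratio_set gY gX c"
      then have gYk: "gY $ k \<noteq> 0" and gXk: "gX $ k = c * gY $ k"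
        by (auto simp: mem_ratio_set field_simps)
      have "piY $ k = gY $ k - bXY * gX $ k" using gY_nth[of k] by simp
      then have "gX $ k \<noteq> 0" "piY $ k / gX $ k = 1 / c - bXY"
        using gXk gYk False by (simp_all add: field_simps)
      then show "k \<in> {j \<in> Vpl \<inter> supp_set gX. piY $ j / gX $ j = 1 / c - bXY}"
        using Vpl[OF k] by (simp add: supp_set_def)
    qed
    then have "card (ratio_set gY gX c) \<le> card {j \<in> Vpl \<inter> supp_set gX. piY $ j / gX $ j = 1 / c - bXY}"
      by (intro card_mono) simp_all
    then show ?thesis using card_pleiotropic_ratio_less[of "1 / c - bXY"] by linarith
  qed
qed

lemma large_ratio_set_YX:
  assumes ge: "card VXY \<le> card (ratio_set gY gX c)"
  shows "(c = bYX \<and> bYX = 0) \<or> (c = 1 / bXY \<and> bXY \<noteq> 0 \<and> ratio_set gY gX c = VXY)"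
proof (cases "c = bYX")
  case True
  have "card (ratio_set gY gX c) \<le> card VYX" using ratio_set_YX_bYX True by (intro card_mono) simp_all
  then show ?thesis using card_VYX_less ge True by fastforce
next
  case False
  then obtain k where k: "k \<in> ratio_set gY gX c" "piY $ k = 0"
    using ratio_set_YX_pleiotropic ge by fastforce
  then have bX: "bXY \<noteq> 0" and cc: "c = 1 / bXY"
    using gY_nth[of k] by (auto simp: mem_ratio_set field_simps)
  have sub: "ratio_set gY gX c \<subseteq> VXY"
  proof
    fix m assume "m \<in> ratio_set gY gX c"
    then have gm: "gY $ m \<noteq> 0" "gX $ m / gY $ m = c" by (auto simp: mem_ratio_set)
    then have "gY $ m = bXY * gX $ m" using cc bX by (simp add: field_simps)
    then have "piY $ m = 0" using gY_nth[of m] by simp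
    moreover have "piX $ m \<noteq> 0"
    proof
      assume "piX $ m = 0"
      then have "gX $ m = bYX * gY $ m" using gX_nth[of m] by simp
      then show False using gm False by simp
    qed
    ultimately show "m \<in> VXY" by simp
  qed
  have "ratio_set gY gX c = VXY"
    by (rule card_subset_eq[OF _ sub]) (use ge card_mono[OF _ sub] in auto)
  then show ?thesis using cc bX by simp
qed

lemma mode_set_YX:
  assumes bX: "bXY \<noteq> 0" and bY: "bYX \<noteq> 0"
  shows "(\<exists>!b. b \<in> mode_set gY gX) \<and> (THE b. b \<in> mode_set gY gX) = 1 / bXY"
proof -
  have "VXY \<subseteq> ratio_set gY gX (1 / bXY)"
    using gX_nonzero_on_VXY gY_nth bX by (auto simp: mem_ratio_set)
  then have VXY_le: "card VXY \<le> card (ratio_set gY gX (1 / bXY))" by (intro card_mono) simp_all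
  have le_VXY: "card (ratio_set gY gX c) \<le> card VXY" for c
    using large_ratio_set_YX[of c] bY by (cases "card VXY \<le> card (ratio_set gY gX c)") auto
  show ?thesis
  proof (rule unique_mode)
    show "card (ratio_set gY gX c) \<le> card (ratio_set gY gX (1 / bXY))" for c
      using le_VXY VXY_le order_trans by blast
    show "c = 1 / bXY" if "card (ratio_set gY gX (1 / bXY)) \<le> card (ratio_set gY gX c)" for c
      using that VXY_le large_ratio_set_YX[of c] bY by auto
  qed
qed

end

section \<open>Moments of the structural equation model\<close>

lemma fst_oPCH:
  "\<exists>!b. b \<in> mode_set g h \<Longrightarrow> fst (oPCH M Z D D' g h) = ereal (THE b. b \<in> mode_set g h)"
  by (simp add: oPCH_def Let_def)

lemma snd_snd_oPCH:
  "\<exists>!b. b \<in> mode_set g h \<Longrightarrow> snd (snd (oPCH M Z D D' g h)) = ratio_set g h (THE b. b \<in> mode_set g h)"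
  by (simp add: oPCH_def Let_def)

lemma oPCH_no_unique_mode: "\<not> (\<exists>!b. b \<in> mode_set g h) \<Longrightarrow> oPCH M Z D D' g h = (PInfty, PInfty, {})"
  by (simp add: oPCH_def)

locale linear_sem =
  fixes M :: "'a measure" and MU :: "'u measure"
    and X Y \<zeta> \<eta> :: "'a \<Rightarrow> real" and Z :: "'a \<Rightarrow> real^'p" and U :: "'a \<Rightarrow> 'u"
    and \<xi>Y \<xi>X :: "'u \<Rightarrow> real"
    and bXY bYX :: real and piX piY :: "real^'p"
  assumes P: "prob_space M"
    and mX[measurable]: "X \<in> borel_measurable M" and mY[measurable]: "Y \<in> borel_measurable M"
    and mZ[measurable]: "Z \<in> borel_measurable M"
    and mzeta[measurable]: "\<zeta> \<in> borel_measurable M" and meta[measurable]: "\<eta> \<in> borel_measurable M"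
    and mU[measurable]: "U \<in> measurable M MU"
    and mxiY[measurable]: "\<xi>Y \<in> borel_measurable MU" and mxiX[measurable]: "\<xi>X \<in> borel_measurable MU"
    and X2: "integrable M (\<lambda>w. (X w)\<^sup>2)" and Y2: "integrable M (\<lambda>w. (Y w)\<^sup>2)"
    and Zsq: "\<And>j. integrable M (\<lambda>w. (Z w $ j)\<^sup>2)"
    and Zmean: "\<And>j. integral\<^sup>L M (\<lambda>w. Z w $ j) = 0"
    and Sig_inv: "invertible (Sig M Z)"
    and eqY: "\<And>w. w \<in> space M \<Longrightarrow> Y w = bXY * X w + piY \<bullet> Z w + \<xi>Y (U w) + \<zeta> w"
    and eqX: "\<And>w. w \<in> space M \<Longrightarrow> X w = bYX * Y w + piX \<bullet> Z w + \<xi>X (U w) + \<eta> w"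
    and xiY_int: "integrable M (\<lambda>w. \<xi>Y (U w))" and xiX_int: "integrable M (\<lambda>w. \<xi>X (U w))"
    and xiY_mean: "integral\<^sup>L M (\<lambda>w. \<xi>Y (U w)) = 0" and xiX_mean: "integral\<^sup>L M (\<lambda>w. \<xi>X (U w)) = 0"
    and indep: "prob_space.indep_set M {Z -` A \<inter> space M | A. A \<in> sets borel}
                                       {U -` B \<inter> space M | B. B \<in> sets MU}"
    and zeta_int: "integrable M \<zeta>" and eta_int: "integrable M \<eta>"
    and cond_zeta: "AE w in M. real_cond_exp M
          (vimage_algebra (space M) (\<lambda>w. (\<eta> w, Z w, U w)) (borel \<Otimes>\<^sub>M (borel \<Otimes>\<^sub>M MU))) \<zeta> w = 0"
    and cond_eta: "AE w in M. real_cond_exp M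
          (vimage_algebra (space M) (\<lambda>w. (\<zeta> w, Z w, U w)) (borel \<Otimes>\<^sub>M (borel \<Otimes>\<^sub>M MU))) \<eta> w = 0"
    and det_nz: "bXY * bYX \<noteq> 1"
    and mXX: "\<And>j. integrable M (\<lambda>w. X w * X w * Z w $ j)"
    and mXY: "\<And>j. integrable M (\<lambda>w. X w * Y w * Z w $ j)"
    and mYY: "\<And>j. integrable M (\<lambda>w. Y w * Y w * Z w $ j)"
    and mZX: "\<And>j k. integrable M (\<lambda>w. Z w $ k * X w * Z w $ j)"
    and mZY: "\<And>j k. integrable M (\<lambda>w. Z w $ k * Y w * Z w $ j)"
begin

sublocale prob_space M by (rule P)

lemma linear_sem_swap: "linear_sem M MU Y X \<eta> \<zeta> Z U \<xi>X \<xi>Y bYX bXY piY piX"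
proof -
  have ind: "prob_space.indep_set M {Z -` A \<inter> space M | A. A \<in> sets borel}
                                   {U -` B \<inter> space M | B. B \<in> sets MU}" by (rule indep)
  show ?thesis
  proof unfold_locales
    show "integrable M (\<lambda>w. Y w * X w * Z w $ j)" for j
      using mXY by (simp add: mult.commute mult.left_commute)
  qed (use P X2 Y2 Zsq Zmean Sig_inv eqX eqY xiY_int xiX_int xiY_mean xiX_mean ind zeta_int eta_int
      cond_zeta cond_eta det_nz mXX mYY mZX mZY in \<open>simp_all add: mult.commute[of bYX bXY]\<close>)
qed

abbreviation "RY w \<equiv> \<xi>Y (U w) + \<zeta> w"
abbreviation "RX w \<equiv> \<xi>X (U w) + \<eta> w"
abbreviation "gX \<equiv> gammaX bXY bYX piX piY"
abbreviation "gY \<equiv> gammaY bXY bYX piX piY"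
abbreviation "det_IB \<equiv> 1 - bXY * bYX"

lemma det_IB_nz: "det_IB \<noteq> 0" using det_nz by simp

lemma gamma_swap: "gammaX bYX bXY piY piX = gY" "gammaY bYX bXY piY piX = gX"
  by (simp_all add: gammaX_def gammaY_def mult.commute)

lemma integrable_Z: "integrable M (\<lambda>w. Z w $ j)"
  by (rule square_integrable_imp_integrable[OF _ Zsq]) measurable

lemma integrable_X: "integrable M X"
  by (rule square_integrable_imp_integrable[OF _ X2]) measurable

lemma integrable_Y: "integrable M Y"
  by (rule square_integrable_imp_integrable[OF _ Y2]) measurable

lemma integrable_RY: "integrable M RY" using xiY_int zeta_int by auto

lemma integrable_RX: "integrable M RX" using xiX_int eta_int by auto

lemma integrable_ZZ: "integrable M (\<lambda>w. Z w $ j * Z w $ k)"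
proof (rule Bochner_Integration.integrable_bound[where f="\<lambda>w. (Z w $ j)\<^sup>2 + (Z w $ k)\<^sup>2"])
  show "integrable M (\<lambda>w. (Z w $ j)\<^sup>2 + (Z w $ k)\<^sup>2)" using Zsq by auto
  show "AE w in M. norm (Z w $ j * Z w $ k) \<le> norm ((Z w $ j)\<^sup>2 + (Z w $ k)\<^sup>2)"
    using abs_mult_le_sum_squares by auto
qed measurable

lemma inner_Z: "a \<bullet> Z w = (\<Sum>k\<in>UNIV. a $ k * Z w $ k)"
  by (simp add: inner_vec_def)

lemma integrable_inner_Z: "integrable M (\<lambda>w. a \<bullet> Z w)"
  unfolding inner_Z using integrable_Z by auto

lemma integrable_inner_Z_Z: "integrable M (\<lambda>w. (a \<bullet> Z w) * Z w $ j)"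
proof -
  have "integrable M (\<lambda>w. \<Sum>k\<in>UNIV. a $ k * (Z w $ k * Z w $ j))"
    using integrable_ZZ by auto
  then show ?thesis by (simp add: inner_Z sum_distrib_right mult.assoc)
qed

lemma integrable_inner_Z_X_Z: "integrable M (\<lambda>w. (a \<bullet> Z w) * X w * Z w $ j)"
proof -
  have "integrable M (\<lambda>w. \<Sum>k\<in>UNIV. a $ k * (Z w $ k * X w * Z w $ j))"
    using mZX by auto
  then show ?thesis by (simp add: inner_Z sum_distrib_right mult.assoc)
qed

lemma integrable_inner_Z_Y_Z: "integrable M (\<lambda>w. (a \<bullet> Z w) * Y w * Z w $ j)"
proof -
  have "integrable M (\<lambda>w. \<Sum>k\<in>UNIV. a $ k * (Z w $ k * Y w * Z w $ j))"
    using mZY by auto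
  then show ?thesis by (simp add: inner_Z sum_distrib_right mult.assoc)
qed

lemma integrable_affine_mult_Z:
  "integrable M (\<lambda>w. (a1 * X w + a2 * Y w + a \<bullet> Z w) * (b1 * X w + b2 * Y w) * Z w $ j)"
proof -
  have "integrable M (\<lambda>w. (a1 * b1) * (X w * X w * Z w $ j) + (a1 * b2 + a2 * b1) * (X w * Y w * Z w $ j)
     + (a2 * b2) * (Y w * Y w * Z w $ j) + b1 * ((a \<bullet> Z w) * X w * Z w $ j)
     + b2 * ((a \<bullet> Z w) * Y w * Z w $ j))"
    using mXX mXY mYY integrable_inner_Z_X_Z integrable_inner_Z_Y_Z
    by (intro Bochner_Integration.integrable_add integrable_mult_right) auto
  then show ?thesis by (simp add: algebra_simps)
qed

lemma integrable_RY_mult_Z: "integrable M (\<lambda>w. RY w * (b1 * X w + b2 * Y w) * Z w $ j)"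
  using integrable_affine_mult_Z[of "-bXY" 1 "-piY" b1 b2 j]
  by (rule Bochner_Integration.integrable_cong[OF refl, THEN iffD1, rotated])
    (auto simp: eqY algebra_simps)

lemma integrable_RX_mult_Z: "integrable M (\<lambda>w. RX w * (b1 * X w + b2 * Y w) * Z w $ j)"
proof -
  interpret sw: linear_sem M MU Y X \<eta> \<zeta> Z U \<xi>X \<xi>Y bYX bXY piY piX by (rule linear_sem_swap)
  show ?thesis using sw.integrable_RY_mult_Z[of b2 b1 j] by (simp add: add.commute)
qed

lemma integrable_R_mult_Z:
  "integrable M (\<lambda>w. RY w * (X w - bYX * Y w) * Z w $ j)"
  "integrable M (\<lambda>w. RY w * (Y w - bXY * X w) * Z w $ j)"
  "integrable M (\<lambda>w. RX w * (X w - bYX * Y w) * Z w $ j)"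
  "integrable M (\<lambda>w. RX w * (Y w - bXY * X w) * Z w $ j)"
  using integrable_RY_mult_Z[of 1 "-bYX" j] integrable_RY_mult_Z[of "-bXY" 1 j]
    integrable_RX_mult_Z[of 1 "-bYX" j] integrable_RX_mult_Z[of "-bXY" 1 j]
  by (simp_all add: algebra_simps)

abbreviation "FZ \<equiv> vimage_algebra (space M) Z borel"
abbreviation "FU \<equiv> vimage_algebra (space M) U MU"
abbreviation "F_eta_Z_U \<equiv> vimage_algebra (space M) (\<lambda>w. (\<eta> w, Z w, U w)) (borel \<Otimes>\<^sub>M (borel \<Otimes>\<^sub>M MU))"
abbreviation "F_zeta_Z_U \<equiv> vimage_algebra (space M) (\<lambda>w. (\<zeta> w, Z w, U w)) (borel \<Otimes>\<^sub>M (borel \<Otimes>\<^sub>M MU))"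

lemma measurable_eta_Z_U: "(\<lambda>w. (\<eta> w, Z w, U w)) \<in> measurable M (borel \<Otimes>\<^sub>M (borel \<Otimes>\<^sub>M MU))"
  by measurable

lemma measurable_zeta_Z_U: "(\<lambda>w. (\<zeta> w, Z w, U w)) \<in> measurable M (borel \<Otimes>\<^sub>M (borel \<Otimes>\<^sub>M MU))"
  by measurable

lemma sigma_finite_FZ: "sigma_finite_subalgebra M FZ"
  by (rule sigma_finite_subalgebra_vimage_algebra[OF finite_measure]) measurable

lemma sigma_finite_FU: "sigma_finite_subalgebra M FU"
  by (rule sigma_finite_subalgebra_vimage_algebra[OF finite_measure mU])

lemma sigma_finite_F_eta_Z_U: "sigma_finite_subalgebra M F_eta_Z_U"
  by (rule sigma_finite_subalgebra_vimage_algebra[OF finite_measure measurable_eta_Z_U])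

lemma sigma_finite_F_zeta_Z_U: "sigma_finite_subalgebra M F_zeta_Z_U"
  by (rule sigma_finite_subalgebra_vimage_algebra[OF finite_measure measurable_zeta_Z_U])

lemma sets_FU: "sets FU = {U -` B \<inter> space M | B. B \<in> sets MU}"
  by (rule sets_vimage_algebra2) (use mU in \<open>simp add: measurable_def\<close>)

lemma sets_FZ: "sets FZ = {Z -` B \<inter> space M | B. B \<in> sets borel}"
  by (rule sets_vimage_algebra2) simp

lemma indep_var_comp_Z_U:
  fixes g :: "real^'p \<Rightarrow> real" and f :: "'u \<Rightarrow> real"
  assumes [measurable]: "g \<in> borel_measurable borel" "f \<in> borel_measurable MU"
  shows "indep_var borel (\<lambda>w. g (Z w)) borel (\<lambda>w. f (U w))"
proof -
  have gZ: "{(\<lambda>w. g (Z w)) -` A \<inter> space M | A. A \<in> sets borel} \<subseteq> {Z -` A \<inter> space M | A. A \<in> sets borel}"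
  proof safe
    fix A :: "real set" assume "A \<in> sets borel"
    then have "g -` A \<in> sets borel" using measurable_sets[OF assms(1)] by simp
    moreover have "(\<lambda>w. g (Z w)) -` A \<inter> space M = Z -` (g -` A) \<inter> space M" by auto
    ultimately show "\<exists>B. (\<lambda>w. g (Z w)) -` A \<inter> space M = Z -` B \<inter> space M \<and> B \<in> sets borel" by blast
  qed
  have fU: "{(\<lambda>w. f (U w)) -` A \<inter> space M | A. A \<in> sets borel} \<subseteq> {U -` A \<inter> space M | A. A \<in> sets MU}"
  proof safe
    fix A :: "real set" assume "A \<in> sets borel"
    then have "f -` A \<inter> space MU \<in> sets MU" using measurable_sets[OF assms(2)] by simp
    moreover have "(\<lambda>w. f (U w)) -` A \<inter> space M = U -` (f -` A \<inter> space MU) \<inter> space M"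
      using measurable_space[OF mU] by auto
    ultimately show "\<exists>B. (\<lambda>w. f (U w)) -` A \<inter> space M = U -` B \<inter> space M \<and> B \<in> sets MU" by blast
  qed
  have "indep_sets (\<lambda>i. {(case i of True \<Rightarrow> (\<lambda>w. g (Z w)) | False \<Rightarrow> (\<lambda>w. f (U w))) -` A \<inter> space M
        | A. A \<in> sets (case i of True \<Rightarrow> borel | False \<Rightarrow> borel)}) UNIV"
    by (rule indep_sets_mono_sets[OF indep[unfolded indep_set_def]])
      (use gZ fU in \<open>auto split: bool.split\<close>)
  then show ?thesis unfolding indep_var_def indep_vars_def2 by (auto split: bool.split)
qed

lemma integral_Z_U_product:
  fixes g :: "real^'p \<Rightarrow> real" and f :: "'u \<Rightarrow> real"
  assumes [measurable]: "g \<in> borel_measurable borel" "f \<in> borel_measurable MU"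
    and gi: "integrable M (\<lambda>w. g (Z w))" and fi: "integrable M (\<lambda>w. f (U w))"
  shows "integrable M (\<lambda>w. g (Z w) * f (U w))"
    "(\<integral>w. g (Z w) * f (U w) \<partial>M) = (\<integral>w. g (Z w) \<partial>M) * (\<integral>w. f (U w) \<partial>M)"
proof -
  have I: "indep_var borel (\<lambda>w. g (Z w)) borel (\<lambda>w. f (U w))"
    by (rule indep_var_comp_Z_U) measurable
  show "integrable M (\<lambda>w. g (Z w) * f (U w))"
    using indep_var_integrable[OF I] fi gi by simp
  show "(\<integral>w. g (Z w) * f (U w) \<partial>M) = (\<integral>w. g (Z w) \<partial>M) * (\<integral>w. f (U w) \<partial>M)"
    using indep_var_lebesgue_integral[OF I] fi gi by simp
qed

lemma integrable_indicator_comp: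
  "B \<in> sets N \<Longrightarrow> V \<in> measurable M N \<Longrightarrow> integrable M (\<lambda>w. indicator B (V w) :: real)"
  by (rule integrable_const_bound[where B=1]) (auto simp: indicator_def)

lemma cond_exp_Z_given_U: "AE w in M. real_cond_exp M FU (\<lambda>w. Z w $ j) w = 0"
proof (rule sigma_finite_subalgebra.real_cond_exp_charact[OF sigma_finite_FU])
  fix A assume "A \<in> sets FU"
  then obtain B where B: "B \<in> sets MU" "A = U -` B \<inter> space M" unfolding sets_FU by auto
  have "(\<integral>w \<in> A. Z w $ j \<partial>M) = (\<integral>w. (Z w $ j) * indicator B (U w) \<partial>M)"
    unfolding set_lebesgue_integral_def B(2)
    by (intro Bochner_Integration.integral_cong) (auto simp: indicator_def)
  also have "\<dots> = (\<integral>w. Z w $ j \<partial>M) * (\<integral>w. indicator B (U w) \<partial>M)"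
    by (rule integral_Z_U_product(2)[where g="\<lambda>z. z $ j" and f="indicator B"])
      (use B integrable_Z integrable_indicator_comp[OF B(1) mU] in auto)
  finally show "(\<integral>w \<in> A. Z w $ j \<partial>M) = (\<integral>w \<in> A. 0 \<partial>M)" using Zmean by simp
qed (use integrable_Z in auto)

lemma integral_indicator_FZ_RY: "A \<in> sets FZ \<Longrightarrow> (\<integral>w. indicator A w * RY w \<partial>M) = 0"
proof -
  assume "A \<in> sets FZ"
  then obtain B where B: "B \<in> sets borel" "A = Z -` B \<inter> space M" unfolding sets_FZ by auto
  have i1: "integrable M (\<lambda>w. indicator B (Z w) * \<xi>Y (U w))"
    by (rule integral_Z_U_product(1)) (use B xiY_int integrable_indicator_comp[OF B(1) mZ] in auto)
  have e1: "(\<integral>w. indicator B (Z w) * \<xi>Y (U w) \<partial>M) = 0"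
    using integral_Z_U_product(2)[of "indicator B" \<xi>Y] B xiY_int
      integrable_indicator_comp[OF B(1) mZ] xiY_mean by simp
  have hF: "(\<lambda>w. indicator B (Z w) :: real) \<in> borel_measurable F_eta_Z_U"
    using measurable_vimage_algebra_comp[OF measurable_eta_Z_U, of "\<lambda>(t,z,u). indicator B z :: real"] B
    by simp
  have i2: "integrable M (\<lambda>w. 0 + indicator B (Z w) * \<zeta> w)"
    using integrable_mult_indicator[of "Z -` B \<inter> space M" M \<zeta>] zeta_int B
    by (subst Bochner_Integration.integrable_cong[OF refl,
          where g="\<lambda>w. indicator (Z -` B \<inter> space M) w *\<^sub>R \<zeta> w"]) (auto simp: indicator_def)
  have e2: "(\<integral>w. indicator B (Z w) * \<zeta> w \<partial>M) = 0"
    by (rule integral_mult_cond_exp_zero(3)[OF sigma_finite_F_eta_Z_U zeta_int cond_zeta _ hF i2]) simp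
  have "(\<integral>w. indicator A w * RY w \<partial>M)
     = (\<integral>w. indicator B (Z w) * \<xi>Y (U w) + indicator B (Z w) * \<zeta> w \<partial>M)"
    unfolding B(2) by (intro Bochner_Integration.integral_cong) (auto simp: indicator_def)
  also have "\<dots> = 0" using i1 i2 e1 e2 by simp
  finally show ?thesis .
qed

text \<open>First \<open>\<zeta>\<close> is removed using its centring given \<open>(\<eta>, Z, U)\<close>, then \<open>\<eta>\<close> using its
  centring given \<open>(\<zeta>, Z, U)\<close>.\<close>

lemma integral_RY_X_Z_eq_xi:
  "integrable M (\<lambda>w. \<xi>Y (U w) * (piX \<bullet> Z w + \<xi>X (U w)) * Z w $ j) \<and>
   (\<integral>w. RY w * (X w - bYX * Y w) * Z w $ j \<partial>M)
     = (\<integral>w. \<xi>Y (U w) * (piX \<bullet> Z w + \<xi>X (U w)) * Z w $ j \<partial>M)"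
proof -
  define a1 where "a1 w = \<xi>Y (U w) * (piX \<bullet> Z w + RX w) * Z w $ j" for w
  define h1 where "h1 w = (piX \<bullet> Z w + RX w) * Z w $ j" for w
  have a1F: "a1 \<in> borel_measurable F_eta_Z_U"
    using measurable_vimage_algebra_comp[OF measurable_eta_Z_U,
        of "\<lambda>(t,z,u). \<xi>Y u * (piX \<bullet> z + (\<xi>X u + t)) * z $ j"]
    unfolding a1_def by simp
  have h1F: "h1 \<in> borel_measurable F_eta_Z_U"
    using measurable_vimage_algebra_comp[OF measurable_eta_Z_U,
        of "\<lambda>(t,z,u). (piX \<bullet> z + (\<xi>X u + t)) * z $ j"]
    unfolding h1_def by simp
  have Q1: "RY w * (X w - bYX * Y w) * Z w $ j = a1 w + h1 w * \<zeta> w" if "w \<in> space M" for w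
    unfolding a1_def h1_def using eqX[OF that] by (simp add: algebra_simps)
  have "integrable M (\<lambda>w. a1 w + h1 w * \<zeta> w)"
    using integrable_R_mult_Z(1)[of j]
    by (rule Bochner_Integration.integrable_cong[OF refl, THEN iffD1, rotated]) (simp add: Q1)
  note p1 = integral_mult_cond_exp_zero[OF sigma_finite_F_eta_Z_U zeta_int cond_zeta a1F h1F this]
  define a2 where "a2 w = \<xi>Y (U w) * (piX \<bullet> Z w + \<xi>X (U w)) * Z w $ j" for w
  define h2 where "h2 w = \<xi>Y (U w) * Z w $ j" for w
  have a2F: "a2 \<in> borel_measurable F_zeta_Z_U"
    using measurable_vimage_algebra_comp[OF measurable_zeta_Z_U,
        of "\<lambda>(t,z,u). \<xi>Y u * (piX \<bullet> z + \<xi>X u) * z $ j"]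
    unfolding a2_def by simp
  have h2F: "h2 \<in> borel_measurable F_zeta_Z_U"
    using measurable_vimage_algebra_comp[OF measurable_zeta_Z_U, of "\<lambda>(t,z,u). \<xi>Y u * z $ j"]
    unfolding h2_def by simp
  have a12: "a1 w = a2 w + h2 w * \<eta> w" for w
    by (simp add: a1_def a2_def h2_def algebra_simps)
  note p2 = integral_mult_cond_exp_zero[OF sigma_finite_F_zeta_Z_U eta_int cond_eta a2F h2F,
      folded a12, OF p1(1)]
  have "(\<integral>w. RY w * (X w - bYX * Y w) * Z w $ j \<partial>M) = (\<integral>w. a1 w + h1 w * \<zeta> w \<partial>M)"
    by (rule Bochner_Integration.integral_cong) (simp_all add: Q1)
  also have "\<dots> = (\<integral>w. a2 w + h2 w * \<eta> w \<partial>M)" using p1 by (simp add: a12)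
  also have "\<dots> = (\<integral>w. a2 w \<partial>M)" using p2 by simp
  finally show ?thesis using p2(1) unfolding a2_def by simp
qed

lemma integral_xiY_xiX_Z_zero:
  assumes int: "integrable M (\<lambda>w. \<xi>Y (U w) * (piX \<bullet> Z w + \<xi>X (U w)) * Z w $ j)"
  shows "(\<integral>w. \<xi>Y (U w) * (piX \<bullet> Z w + \<xi>X (U w)) * Z w $ j \<partial>M) = 0"
proof -
  note Z_xiY = integral_Z_U_product[where g="\<lambda>z. (piX \<bullet> z) * z $ j" and f=\<xi>Y]
  have i1: "integrable M (\<lambda>w. ((piX \<bullet> Z w) * Z w $ j) * \<xi>Y (U w))"
    using Z_xiY(1) xiY_int integrable_inner_Z_Z by simp
  have e1: "(\<integral>w. ((piX \<bullet> Z w) * Z w $ j) * \<xi>Y (U w) \<partial>M) = 0"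
    using Z_xiY(2) xiY_int integrable_inner_Z_Z xiY_mean by simp
  have i2: "integrable M (\<lambda>w. 0 + (\<xi>Y (U w) * \<xi>X (U w)) * Z w $ j)"
    using Bochner_Integration.integrable_diff[OF int i1]
    by (rule Bochner_Integration.integrable_cong[OF refl, THEN iffD1, rotated]) (simp add: algebra_simps)
  have hU: "(\<lambda>w. \<xi>Y (U w) * \<xi>X (U w)) \<in> borel_measurable FU"
    using measurable_vimage_algebra_comp[OF mU, of "\<lambda>u. \<xi>Y u * \<xi>X u"] by simp
  note e2 = integral_mult_cond_exp_zero[OF sigma_finite_FU integrable_Z cond_exp_Z_given_U _ hU i2]
  have "(\<integral>w. \<xi>Y (U w) * (piX \<bullet> Z w + \<xi>X (U w)) * Z w $ j \<partial>M)
      = (\<integral>w. ((piX \<bullet> Z w) * Z w $ j) * \<xi>Y (U w) + (\<xi>Y (U w) * \<xi>X (U w)) * Z w $ j \<partial>M)"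
    by (rule Bochner_Integration.integral_cong) (simp_all add: algebra_simps)
  also have "\<dots> = 0" using i1 e1 e2 by simp
  finally show ?thesis .
qed

lemma integral_RY_X_Z_zero: "(\<integral>w. RY w * (X w - bYX * Y w) * Z w $ j \<partial>M) = 0"
  using integral_RY_X_Z_eq_xi integral_xiY_xiX_Z_zero by simp

lemma integral_RX_Y_Z_zero: "(\<integral>w. RX w * (Y w - bXY * X w) * Z w $ j \<partial>M) = 0"
proof -
  interpret sw: linear_sem M MU Y X \<eta> \<zeta> Z U \<xi>X \<xi>Y bYX bXY piY piX by (rule linear_sem_swap)
  show ?thesis by (rule sw.integral_RY_X_Z_zero)
qed

lemma inner_gammaX: "gX \<bullet> z = (piX \<bullet> z + bYX * (piY \<bullet> z)) / det_IB"
  by (simp add: gammaX_def inner_add_left)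

lemma inner_gammaY: "gY \<bullet> z = (piY \<bullet> z + bXY * (piX \<bullet> z)) / det_IB"
  by (simp add: gammaY_def inner_add_left)

lemma partial_residual_eq:
  assumes w: "w \<in> space M"
  shows "(Y w - b * X w) - (gY - b *\<^sub>R gX) \<bullet> Z w
    = ((1 - b * bYX) / det_IB) * RY w + ((bXY - b) / det_IB) * RX w"
proof -
  have "(gY \<bullet> Z w) * det_IB = piY \<bullet> Z w + bXY * (piX \<bullet> Z w)"
    and "(gX \<bullet> Z w) * det_IB = piX \<bullet> Z w + bYX * (piY \<bullet> Z w)"
    unfolding inner_gammaX inner_gammaY using det_IB_nz by simp_all
  moreover have "(gY - b *\<^sub>R gX) \<bullet> Z w = gY \<bullet> Z w - b * (gX \<bullet> Z w)"
    by (simp add: inner_diff_left)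
  ultimately have "((gY - b *\<^sub>R gX) \<bullet> Z w) * det_IB
      = (piY \<bullet> Z w + bXY * (piX \<bullet> Z w)) - b * (piX \<bullet> Z w + bYX * (piY \<bullet> Z w))"
    by algebra
  then have key: "((Y w - b * X w) - (gY - b *\<^sub>R gX) \<bullet> Z w) * det_IB
      = (1 - b * bYX) * RY w + (bXY - b) * RX w"
    using eqX[OF w] eqY[OF w] by algebra
  have sum: "((1 - b * bYX) / det_IB) * RY w + ((bXY - b) / det_IB) * RX w
      = ((1 - b * bYX) * RY w + (bXY - b) * RX w) / det_IB"
    by (simp add: add_divide_distrib)
  show ?thesis unfolding sum using key det_IB_nz by (simp add: eq_divide_eq)
qed

lemma cexpZ_partial_residual: "AE w in M. cexpZ M Z (\<lambda>w. Y w - b * X w) w = (gY - b *\<^sub>R gX) \<bullet> Z w"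
  unfolding cexpZ_def
proof (rule sigma_finite_subalgebra.real_cond_exp_charact[OF sigma_finite_FZ])
  interpret sw: linear_sem M MU Y X \<eta> \<zeta> Z U \<xi>X \<xi>Y bYX bXY piY piX by (rule linear_sem_swap)
  let ?v = "gY - b *\<^sub>R gX" and ?c1 = "(1 - b * bYX) / det_IB" and ?c2 = "(bXY - b) / det_IB"
  fix A assume A: "A \<in> sets FZ"
  then have AM: "A \<in> sets M"
    using sigma_finite_FZ by (meson sigma_finite_subalgebra.subalg subalgebra_def subsetD)
  have "(\<integral>w \<in> A. Y w - b * X w \<partial>M)
      = (\<integral>w. indicator A w * (?v \<bullet> Z w) + ?c1 * (indicator A w * RY w)
             + ?c2 * (indicator A w * RX w) \<partial>M)"
    unfolding set_lebesgue_integral_def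
  proof (rule Bochner_Integration.integral_cong[OF refl])
    fix w assume "w \<in> space M"
    then have "Y w - b * X w = ?v \<bullet> Z w + ?c1 * RY w + ?c2 * RX w"
      using partial_residual_eq[of w b] by (simp add: algebra_simps)
    moreover have "\<And>i v c1 c2 r1 r2::real. i * (v + c1 * r1 + c2 * r2) = i * v + c1 * (i * r1) + c2 * (i * r2)"
      by (simp add: algebra_simps)
    ultimately show "indicator A w *\<^sub>R (Y w - b * X w) = indicator A w * (?v \<bullet> Z w)
        + ?c1 * (indicator A w * RY w) + ?c2 * (indicator A w * RX w)"
      by (simp only: real_scaleR_def)
  qed
  also have "\<dots> = (\<integral>w. indicator A w * (?v \<bullet> Z w) \<partial>M)"
    using integrable_mult_indicator[OF AM integrable_inner_Z[of ?v]]
      integrable_mult_indicator[OF AM integrable_RY] integrable_mult_indicator[OF AM integrable_RX]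
      integral_indicator_FZ_RY[OF A] sw.integral_indicator_FZ_RY[OF A]
    by simp
  finally show "(\<integral>w \<in> A. Y w - b * X w \<partial>M) = (\<integral>w \<in> A. ?v \<bullet> Z w \<partial>M)"
    unfolding set_lebesgue_integral_def by simp
next
  show "integrable M (\<lambda>w. Y w - b * X w)" using integrable_X integrable_Y by auto
  show "integrable M (\<lambda>w. (gY - b *\<^sub>R gX) \<bullet> Z w)" by (rule integrable_inner_Z)
  show "(\<lambda>w. (gY - b *\<^sub>R gX) \<bullet> Z w) \<in> borel_measurable FZ"
    using measurable_vimage_algebra_comp[OF mZ, of "\<lambda>z. (gY - b *\<^sub>R gX) \<bullet> z"] by simp
qed

lemma integral_Lambda_mult_Z:
  assumes [measurable]: "D \<in> borel_measurable M"
  shows "(\<integral>w. (Y w - b * X w - cexpZ M Z (\<lambda>w. Y w - b * X w) w) * D w * Z w $ j \<partial>M)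
       = (\<integral>w. (((1 - b * bYX) / det_IB) * RY w + ((bXY - b) / det_IB) * RX w) * D w * Z w $ j \<partial>M)"
proof -
  have [measurable]: "cexpZ M Z (\<lambda>w. Y w - b * X w) \<in> borel_measurable M"
    unfolding cexpZ_def by (rule borel_measurable_cond_exp2)
  show ?thesis
  proof (rule integral_cong_AE)
    show "AE w in M. (Y w - b * X w - cexpZ M Z (\<lambda>w. Y w - b * X w) w) * D w * Z w $ j
        = (((1 - b * bYX) / det_IB) * RY w + ((bXY - b) / det_IB) * RX w) * D w * Z w $ j"
      using cexpZ_partial_residual[of b] AE_space by eventually_elim (simp add: partial_residual_eq)
  qed measurable
qed

definition "momRX j = (\<integral>w. RX w * (X w - bYX * Y w) * Z w $ j \<partial>M)"
definition "momRY j = (\<integral>w. RY w * (Y w - bXY * X w) * Z w $ j \<partial>M)"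

text \<open>Both moment identities rest on \<open>det_IB \<cdot> X = (X - bYX Y) + bYX (Y - bXY X)\<close> and its
  mirror image, together with the two vanishing cross moments.\<close>

lemma integral_R_X_Z:
  "(\<integral>w. (c1 * RY w + c2 * RX w) * X w * Z w $ j \<partial>M) = (c2 * momRX j + bYX * c1 * momRY j) / det_IB"
proof -
  have "(\<integral>w. (c1 * RY w + c2 * RX w) * X w * Z w $ j \<partial>M)
    = (\<integral>w. (c1 * (RY w * (X w - bYX * Y w) * Z w $ j)
        + c1 * bYX * (RY w * (Y w - bXY * X w) * Z w $ j)
        + c2 * (RX w * (X w - bYX * Y w) * Z w $ j)
        + c2 * bYX * (RX w * (Y w - bXY * X w) * Z w $ j)) / det_IB \<partial>M)"
    using det_IB_nz by (intro Bochner_Integration.integral_cong) (simp_all add: eq_divide_eq, algebra)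
  also have "\<dots> = (c2 * momRX j + bYX * c1 * momRY j) / det_IB"
    using integrable_R_mult_Z[of j] integral_RY_X_Z_zero[of j] integral_RX_Y_Z_zero[of j]
    unfolding momRX_def momRY_def by simp
  finally show ?thesis .
qed

lemma integral_R_Y_Z:
  "(\<integral>w. (c1 * RY w + c2 * RX w) * Y w * Z w $ j \<partial>M) = (c1 * momRY j + bXY * c2 * momRX j) / det_IB"
proof -
  have "(\<integral>w. (c1 * RY w + c2 * RX w) * Y w * Z w $ j \<partial>M)
    = (\<integral>w. (c1 * (RY w * (Y w - bXY * X w) * Z w $ j)
        + c1 * bXY * (RY w * (X w - bYX * Y w) * Z w $ j)
        + c2 * (RX w * (Y w - bXY * X w) * Z w $ j)
        + c2 * bXY * (RX w * (X w - bYX * Y w) * Z w $ j)) / det_IB \<partial>M)"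
    using det_IB_nz by (intro Bochner_Integration.integral_cong) (simp_all add: eq_divide_eq, algebra)
  also have "\<dots> = (c1 * momRY j + bXY * c2 * momRX j) / det_IB"
    using integrable_R_mult_Z[of j] integral_RY_X_Z_zero[of j] integral_RX_Y_Z_zero[of j]
    unfolding momRX_def momRY_def by simp
  finally show ?thesis .
qed

lemma momRY_nonzero:
  assumes "(\<chi> j. (\<integral>w. Y w * RY w * Z w $ j \<partial>M) - (\<integral>w. Y w * RY w \<partial>M) * (\<integral>w. Z w $ j \<partial>M)) \<noteq> 0"
  shows "(\<chi> j. momRY j) \<noteq> 0"
proof
  assume "(\<chi> j. momRY j) = 0"
  then have "(\<integral>w. (1 * RY w + 0 * RX w) * Y w * Z w $ j \<partial>M) = 0" for j
    unfolding integral_R_Y_Z by (simp add: vec_eq_iff)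
  then show False using assms Zmean by (simp add: vec_eq_iff mult.commute mult.left_commute)
qed

lemma Sig_mult_nth: "(Sig M Z *v th) $ j = (\<integral>w. Z w $ j * (th \<bullet> Z w) \<partial>M)"
proof -
  have "(Sig M Z *v th) $ j = (\<Sum>k\<in>UNIV. (\<integral>w. Z w $ j * Z w $ k * th $ k \<partial>M))"
    by (simp add: matrix_vector_mult_def Sig_def)
  also have "\<dots> = (\<integral>w. (\<Sum>k\<in>UNIV. Z w $ j * Z w $ k * th $ k) \<partial>M)"
    by (rule Bochner_Integration.integral_sum[symmetric]) (use integrable_ZZ in auto)
  finally show ?thesis by (simp add: inner_Z sum_distrib_left mult.assoc mult.commute mult.left_commute)
qed

lemma inner_Sig_mult: "th \<bullet> (Sig M Z *v th) = (\<integral>w. ((th \<bullet> Z w)\<^sup>2) \<partial>M)"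
proof -
  have "th \<bullet> (Sig M Z *v th) = (\<Sum>j\<in>UNIV. (\<integral>w. th $ j * (Z w $ j * (th \<bullet> Z w)) \<partial>M))"
    by (simp add: inner_vec_def Sig_mult_nth)
  also have "\<dots> = (\<integral>w. (\<Sum>j\<in>UNIV. th $ j * (Z w $ j * (th \<bullet> Z w))) \<partial>M)"
    by (rule Bochner_Integration.integral_sum[symmetric])
      (use integrable_inner_Z_Z in \<open>auto simp: mult.commute\<close>)
  finally show ?thesis
    by (simp add: inner_Z[of th] sum_distrib_right power2_eq_square mult.assoc mult.commute mult.left_commute)
qed

lemma Sig_definite:
  assumes "th \<bullet> (Sig M Z *v th) = 0"
  shows "th = 0"
proof -
  have "integrable M (\<lambda>w. \<Sum>k\<in>UNIV. th $ k * ((th \<bullet> Z w) * Z w $ k))"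
    using integrable_inner_Z_Z by auto
  then have sq: "integrable M (\<lambda>w. (th \<bullet> Z w)\<^sup>2)"
    by (simp add: inner_Z[of th] sum_distrib_left power2_eq_square mult.commute mult.left_commute)
  have "AE w in M. th \<bullet> Z w = 0"
    using integral_nonneg_eq_0_iff_AE[OF sq] assms inner_Sig_mult by simp
  then have "(\<integral>w. Z w $ j * (th \<bullet> Z w) \<partial>M) = 0" for j
    by (subst integral_cong_AE[where g="\<lambda>_. 0"]) auto
  then have "Sig M Z *v th = 0" by (simp add: vec_eq_iff Sig_mult_nth)
  then show "th = 0" using matrix_vector_mul_inv(2)[OF Sig_inv, of th] by simp
qed

lemma oPCH_XY:
  assumes u: "\<exists>!b'. b' \<in> mode_set gX gY" and t: "(THE b'. b' \<in> mode_set gX gY) = b"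
  shows "oPCH M Z X Y gX gY = (ereal b,
     lsq_coef (Sig M Z)
       (\<chi> j. (((bXY - b) / det_IB) * momRX j + bYX * ((1 - b * bYX) / det_IB) * momRY j) / det_IB)
       (\<chi> j. (((1 - b * bYX) / det_IB) * momRY j + bXY * ((bXY - b) / det_IB) * momRX j) / det_IB),
     ratio_set gX gY b)"
proof -
  have "(\<chi> j. \<integral>w. (Y w - b * X w - cexpZ M Z (\<lambda>w. Y w - b * X w) w) * X w * Z w $ j \<partial>M)
      = (\<chi> j. (((bXY - b) / det_IB) * momRX j + bYX * ((1 - b * bYX) / det_IB) * momRY j) / det_IB)"
    "(\<chi> j. \<integral>w. (Y w - b * X w - cexpZ M Z (\<lambda>w. Y w - b * X w) w) * Y w * Z w $ j \<partial>M)
      = (\<chi> j. (((1 - b * bYX) / det_IB) * momRY j + bXY * ((bXY - b) / det_IB) * momRX j) / det_IB)"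
    unfolding integral_Lambda_mult_Z[OF mX] integral_Lambda_mult_Z[OF mY]
      integral_R_X_Z integral_R_Y_Z by (rule refl)+
  then show ?thesis unfolding oPCH_def using u t by (simp add: Let_def lsq_coef_def)
qed

lemma oPCH_XY_bXY:
  assumes "\<exists>!b'. b' \<in> mode_set gX gY" and "(THE b'. b' \<in> mode_set gX gY) = bXY"
  shows "oPCH M Z X Y gX gY
    = (ereal bXY, (if (\<chi> j. momRY j) \<noteq> 0 then ereal bYX else PInfty), ratio_set gX gY bXY)"
proof -
  let ?vY = "\<chi> j. (((1 - bXY * bYX) / det_IB) * momRY j + bXY * ((bXY - bXY) / det_IB) * momRX j) / det_IB"
  have c1: "(1 - bXY * bYX) / det_IB = 1" using det_IB_nz by simp
  have vX: "(\<chi> j. (((bXY - bXY) / det_IB) * momRX j + bYX * ((1 - bXY * bYX) / det_IB) * momRY j) / det_IB)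
      = bYX *\<^sub>R ?vY"
    by (simp add: vec_eq_iff)
  have "?vY \<noteq> 0 \<longleftrightarrow> (\<chi> j. momRY j) \<noteq> 0" using det_IB_nz by (simp add: c1 vec_eq_iff)
  then show ?thesis
    using oPCH_XY[OF assms] lsq_coef_proportional[OF Sig_inv Sig_definite vX] by (simp only:)
qed

lemma oPCH_XY_inverse_bYX:
  assumes "bYX \<noteq> 0"
    and "\<exists>!b'. b' \<in> mode_set gX gY" and "(THE b'. b' \<in> mode_set gX gY) = 1 / bYX"
  shows "fst (snd (oPCH M Z X Y gX gY)) \<noteq> 0
    \<and> (fst (snd (oPCH M Z X Y gX gY)) \<noteq> PInfty \<longrightarrow> bXY \<noteq> 0)"
proof -
  let ?c2 = "(bXY - 1 / bYX) / det_IB"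
  have c1: "(1 - 1 / bYX * bYX) / det_IB = 0" using assms(1) by simp
  have vY: "(\<chi> j. (0 * momRY j + bXY * ?c2 * momRX j) / det_IB)
      = bXY *\<^sub>R (\<chi> j. (?c2 * momRX j + bYX * 0 * momRY j) / det_IB)"
    by (simp add: vec_eq_iff)
  show ?thesis
    unfolding oPCH_XY[OF assms(2,3)] c1 using lsq_coef_inverse_proportional[OF Sig_inv vY] by simp
qed

end

section \<open>Identification of the causal direction\<close>

locale linear_sem_A = linear_sem +
  assumes card_cond: "card_condition bYX piX piY (gammaX bXY bYX piX piY)"
begin

sublocale ratio_counting bXY bYX piX piY gX gY
  by (rule ratio_counting.intro[OF det_nz gammaY_nth[OF det_nz] gammaX_nth[OF det_nz] card_cond])

lemma oPCH_XY_eq_effects: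
  assumes "(\<chi> j. (\<integral>w. Y w * RY w * Z w $ j \<partial>M) - (\<integral>w. Y w * RY w \<partial>M) * (\<integral>w. Z w $ j \<partial>M)) \<noteq> 0"
  shows "oPCH M Z X Y gX gY = (ereal bXY, ereal bYX, VXY)"
  using oPCH_XY_bXY mode_set_XY ratio_set_XY_bXY momRY_nonzero[OF assms] by simp

lemma oPCH_YX_nonzero:
  assumes bX: "bXY \<noteq> 0" and bY: "bYX \<noteq> 0"
  shows "fst (oPCH M Z Y X gY gX) \<noteq> 0 \<and> fst (snd (oPCH M Z Y X gY gX)) \<noteq> 0"
proof -
  interpret sw: linear_sem M MU Y X \<eta> \<zeta> Z U \<xi>X \<xi>Y bYX bXY piY piX by (rule linear_sem_swap)
  have u: "\<exists>!b. b \<in> mode_set gY gX" and t: "(THE b. b \<in> mode_set gY gX) = 1 / bXY"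
    using mode_set_YX[OF bX bY] by auto
  have "fst (oPCH M Z Y X gY gX) = ereal (1 / bXY)" using fst_oPCH[OF u] t by simp
  moreover have "fst (snd (oPCH M Z Y X gY gX)) \<noteq> 0"
    using sw.oPCH_XY_inverse_bYX[unfolded gamma_swap, OF bX u t] by blast
  ultimately show ?thesis using bX by simp
qed

lemma oPCH_YX_finite:
  assumes II: "oPCH M Z Y X gY gX = (p, q, V)" and pf: "p \<noteq> PInfty" and qf: "q \<noteq> PInfty"
    and cV: "card VXY \<le> card V"
  shows "(p = ereal bYX \<and> q = ereal bXY \<and> bYX = 0) \<or> (card V = card VXY \<and> bXY \<noteq> 0 \<and> bYX \<noteq> 0)"
proof -
  interpret sw: linear_sem M MU Y X \<eta> \<zeta> Z U \<xi>X \<xi>Y bYX bXY piY piX by (rule linear_sem_swap)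
  note sw_oPCH = sw.oPCH_XY_bXY[unfolded gamma_swap]
    sw.oPCH_XY_inverse_bYX[unfolded gamma_swap]
  have u: "\<exists>!b. b \<in> mode_set gY gX"
  proof (rule ccontr)
    assume "\<not> (\<exists>!b. b \<in> mode_set gY gX)"
    then show False using oPCH_no_unique_mode[of gY gX M Z Y X] II pf by simp
  qed
  define c where "c = (THE b. b \<in> mode_set gY gX)"
  have p: "p = ereal c" and V: "V = ratio_set gY gX c"
    using fst_oPCH[OF u, of M Z Y X] snd_snd_oPCH[OF u, of M Z Y X] II unfolding c_def by simp_all
  from large_ratio_set_YX[of c] cV consider (zero) "c = bYX" "bYX = 0"
    | (inverse) "c = 1 / bXY" "bXY \<noteq> 0" "ratio_set gY gX c = VXY"
    unfolding V by blast
  then show ?thesis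
  proof cases
    case zero
    have "(THE b. b \<in> mode_set gY gX) = bYX" using zero(1) unfolding c_def .
    from sw_oPCH(1)[OF u this] II have "q = ereal bXY \<or> q = PInfty" by (auto split: if_splits)
    then show ?thesis using qf p zero by simp
  next
    case inverse
    then have "(THE b. b \<in> mode_set gY gX) = 1 / bXY" unfolding c_def by simp
    from sw_oPCH(2)[OF inverse(2) u this] II qf have "bYX \<noteq> 0" by simp
    then show ?thesis using V inverse by simp
  qed
qed

end

lemma ereal_max_eq_PInfty_iff: "max x y = (\<infinity>::ereal) \<longleftrightarrow> x = \<infinity> \<or> y = \<infinity>"
  by (auto simp: max_def)

lemma ereal_zero_less_abs_iff: "(0::ereal) < \<bar>x\<bar> \<longleftrightarrow> x \<noteq> 0"
  by (cases x) auto

lemma H_circ_eq_2: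
  assumes "a1 \<noteq> 0" "a2 \<noteq> 0" "b1 \<noteq> 0" "b2 \<noteq> 0"
  shows "H_circ a1 a2 b2 b1 V W = Some 2"
proof -
  have "0 < Min {\<bar>a1\<bar>, \<bar>a2\<bar>, \<bar>b2\<bar>, \<bar>b1\<bar>}"
    using assms by (simp add: ereal_zero_less_abs_iff)
  then show ?thesis unfolding H_circ_def Let_def by (simp add: case_prod_unfold)
qed

lemma H_circ_eq_H_true_if_beta_circ:
  assumes "bXY * bYX = 0" and "beta_circ a1 a2 V b2 b1 W = (ereal bXY, ereal bYX)"
    and "0 \<in> {\<bar>a1\<bar>, \<bar>a2\<bar>, \<bar>b2\<bar>, \<bar>b1\<bar>}"
  shows "H_circ a1 a2 b2 b1 V W = Some (H_true bXY bYX)"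
proof -
  have "Min {\<bar>a1\<bar>, \<bar>a2\<bar>, \<bar>b2\<bar>, \<bar>b1\<bar>} \<le> 0"
    using Min_le[OF _ assms(3)] by simp
  then have "\<not> 0 < Min {\<bar>a1\<bar>, \<bar>a2\<bar>, \<bar>b2\<bar>, \<bar>b1\<bar>}" by (simp only: not_less)
  then show ?thesis unfolding H_circ_def Let_def assms(2) using assms(1) by (auto simp: H_true_def)
qed

lemma H_circ_eq_H_true_via_I:
  assumes I: "a1 = ereal bXY" "a2 = ereal bYX" "a3 = VA"
    and II_nonzero: "bXY \<noteq> 0 \<Longrightarrow> bYX \<noteq> 0 \<Longrightarrow> b1 \<noteq> 0 \<and> b2 \<noteq> 0"
    and II_finite: "b1 \<noteq> PInfty \<Longrightarrow> b2 \<noteq> PInfty \<Longrightarrow> card VA \<le> card b3 \<Longrightarrow>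
       (b1 = ereal bYX \<and> b2 = ereal bXY \<and> bYX = 0) \<or> (card b3 = card VA \<and> bXY \<noteq> 0 \<and> bYX \<noteq> 0)"
  shows "H_circ a1 a2 b2 b1 a3 b3 = Some (H_true bXY bYX)"
proof (cases "bXY \<noteq> 0 \<and> bYX \<noteq> 0")
  case True
  then show ?thesis using II_nonzero I by (simp add: H_circ_eq_2 H_true_def)
next
  case False
  consider "max b2 b1 = \<infinity>" | "max b2 b1 \<noteq> \<infinity>" "card b3 \<le> card a3"
    | (II_wins) "max b2 b1 \<noteq> \<infinity>" "\<not> card b3 \<le> card a3"
    by blast
  then have "beta_circ a1 a2 a3 b2 b1 b3 = (ereal bXY, ereal bYX)"
  proof cases
    case II_wins
    then have "b1 \<noteq> PInfty" "b2 \<noteq> PInfty" "card VA \<le> card b3"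
      using I by (auto simp: ereal_max_eq_PInfty_iff)
    then have "b1 = ereal bYX \<and> b2 = ereal bXY" using II_finite False by blast
    then show ?thesis unfolding beta_circ_def using I II_wins by (simp add: ereal_max_eq_PInfty_iff)
  qed (simp_all add: beta_circ_def I ereal_max_eq_PInfty_iff)
  then show ?thesis using False I by (intro H_circ_eq_H_true_if_beta_circ) auto
qed

lemma H_circ_eq_H_true_via_II:
  assumes II: "b1 = ereal bYX" "b2 = ereal bXY" "b3 = VB"
    and I_nonzero: "bXY \<noteq> 0 \<Longrightarrow> bYX \<noteq> 0 \<Longrightarrow> a1 \<noteq> 0 \<and> a2 \<noteq> 0"
    and I_finite: "a1 \<noteq> PInfty \<Longrightarrow> a2 \<noteq> PInfty \<Longrightarrow> card VB \<le> card a3 \<Longrightarrow>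
       (a1 = ereal bXY \<and> a2 = ereal bYX \<and> bXY = 0) \<or> (card a3 = card VB \<and> bYX \<noteq> 0 \<and> bXY \<noteq> 0)"
  shows "H_circ a1 a2 b2 b1 a3 b3 = Some (H_true bXY bYX)"
proof (cases "bXY \<noteq> 0 \<and> bYX \<noteq> 0")
  case True
  then show ?thesis using I_nonzero II by (simp add: H_circ_eq_2 H_true_def)
next
  case False
  have II_finite: "max b2 b1 \<noteq> \<infinity>" using II by (simp add: ereal_max_eq_PInfty_iff)
  consider "max a1 a2 = \<infinity>" | (I_wins) "max a1 a2 \<noteq> \<infinity>" "card b3 \<le> card a3"
    | "max a1 a2 \<noteq> \<infinity>" "\<not> card b3 \<le> card a3"
    by blast
  then have "beta_circ a1 a2 a3 b2 b1 b3 = (ereal bXY, ereal bYX)"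
  proof cases
    case I_wins
    then have "a1 \<noteq> PInfty" "a2 \<noteq> PInfty" "card VB \<le> card a3"
      using II by (auto simp: ereal_max_eq_PInfty_iff)
    then have "a1 = ereal bXY \<and> a2 = ereal bYX" using I_finite False by blast
    then show ?thesis unfolding beta_circ_def using II_finite I_wins by simp
  qed (simp_all add: beta_circ_def II II_finite ereal_max_eq_PInfty_iff)
  then show ?thesis using False II by (intro H_circ_eq_H_true_if_beta_circ) auto
qed

context linear_sem
begin

lemma H_circ_eq_H_true_assmA:
  assumes A: "assmA M Z Y RY bYX piX piY gX"
    and I: "oPCH M Z X Y gX gY = (a1, a2, a3)" and II: "oPCH M Z Y X gY gX = (b1, b2, b3)"
  shows "H_circ a1 a2 b2 b1 a3 b3 = Some (H_true bXY bYX)"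
proof -
  interpret linear_sem_A M MU X Y \<zeta> \<eta> Z U \<xi>Y \<xi>X bXY bYX piX piY
    using linear_sem_axioms A by (intro linear_sem_A.intro linear_sem_A_axioms.intro) (simp_all add: assmA_iff)
  show ?thesis
  proof (rule H_circ_eq_H_true_via_I)
    show "a1 = ereal bXY" "a2 = ereal bYX" "a3 = VXY"
      using oPCH_XY_eq_effects A I by (simp_all add: assmA_iff)
    show "b1 \<noteq> 0 \<and> b2 \<noteq> 0" if "bXY \<noteq> 0" "bYX \<noteq> 0"
      using oPCH_YX_nonzero[OF that] II by simp
    show "(b1 = ereal bYX \<and> b2 = ereal bXY \<and> bYX = 0) \<or> (card b3 = card VXY \<and> bXY \<noteq> 0 \<and> bYX \<noteq> 0)"
      if "b1 \<noteq> PInfty" "b2 \<noteq> PInfty" "card VXY \<le> card b3"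
      by (rule oPCH_YX_finite[OF II that])
  qed
qed

lemma H_circ_eq_H_true_assmA':
  assumes A': "assmA M Z X RX bXY piY piX gY"
    and I: "oPCH M Z X Y gX gY = (a1, a2, a3)" and II: "oPCH M Z Y X gY gX = (b1, b2, b3)"
  shows "H_circ a1 a2 b2 b1 a3 b3 = Some (H_true bXY bYX)"
proof -
  interpret sw: linear_sem_A M MU Y X \<eta> \<zeta> Z U \<xi>X \<xi>Y bYX bXY piY piX
    using linear_sem_swap A' by (intro linear_sem_A.intro linear_sem_A_axioms.intro)
      (simp_all add: assmA_iff gamma_swap)
  note sw_facts = sw.oPCH_XY_eq_effects[unfolded gamma_swap] sw.oPCH_YX_nonzero[unfolded gamma_swap]
    sw.oPCH_YX_finite[unfolded gamma_swap]
  show ?thesis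
  proof (rule H_circ_eq_H_true_via_II)
    show "b1 = ereal bYX" "b2 = ereal bXY" "b3 = sw.VXY"
      using sw_facts(1) A' II by (simp_all add: assmA_iff)
    show "a1 \<noteq> 0 \<and> a2 \<noteq> 0" if "bXY \<noteq> 0" "bYX \<noteq> 0"
      using sw_facts(2)[OF that(2,1)] I by simp
    show "(a1 = ereal bXY \<and> a2 = ereal bYX \<and> bXY = 0) \<or> (card a3 = card sw.VXY \<and> bYX \<noteq> 0 \<and> bXY \<noteq> 0)"
      if "a1 \<noteq> PInfty" "a2 \<noteq> PInfty" "card sw.VXY \<le> card a3"
      by (rule sw_facts(3)[OF I that])
  qed
qed

end

theorem theorem3:
  fixes M :: "'a measure" and MU :: "'u measure"
    and X Y \<zeta> \<eta> :: "'a \<Rightarrow> real" and Z :: "'a \<Rightarrow> real^'p" and U :: "'a \<Rightarrow> 'u"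
    and \<xi>Y \<xi>X :: "'u \<Rightarrow> real"
    and bXY bYX :: real and piX piY :: "real^'p"
  assumes P: "prob_space M"
    and meas: "X \<in> borel_measurable M" "Y \<in> borel_measurable M" "Z \<in> borel_measurable M"
              "\<zeta> \<in> borel_measurable M" "\<eta> \<in> borel_measurable M" "U \<in> measurable M MU"
              "\<xi>Y \<in> borel_measurable MU" "\<xi>X \<in> borel_measurable MU"
    and finvar: "integrable M (\<lambda>w. (X w)\<^sup>2)" "integrable M (\<lambda>w. (Y w)\<^sup>2)"
    and Zsq: "\<And>j. integrable M (\<lambda>w. (Z w $ j)\<^sup>2)"
    and means: "integral\<^sup>L M X = 0" "integral\<^sup>L M Y = 0" "\<And>j. integral\<^sup>L M (\<lambda>w. Z w $ j) = 0"
    and Sig_inv: "invertible (Sig M Z)"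
    and eqY: "\<And>w. w \<in> space M \<Longrightarrow> Y w = bXY * X w + piY \<bullet> Z w + \<xi>Y (U w) + \<zeta> w"
    and eqX: "\<And>w. w \<in> space M \<Longrightarrow> X w = bYX * Y w + piX \<bullet> Z w + \<xi>X (U w) + \<eta> w"
    and xi_int: "integrable M (\<lambda>w. \<xi>Y (U w))" "integrable M (\<lambda>w. \<xi>X (U w))"
    and xi_mean: "integral\<^sup>L M (\<lambda>w. \<xi>Y (U w)) = 0" "integral\<^sup>L M (\<lambda>w. \<xi>X (U w)) = 0"
    and indep: "prob_space.indep_set M {Z -` A \<inter> space M | A. A \<in> sets borel}
                                       {U -` B \<inter> space M | B. B \<in> sets MU}"
    and err_int: "integrable M \<zeta>" "integrable M \<eta>"
    and cond_zeta: "AE w in M. real_cond_exp M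
          (vimage_algebra (space M) (\<lambda>w. (\<eta> w, Z w, U w)) (borel \<Otimes>\<^sub>M (borel \<Otimes>\<^sub>M MU))) \<zeta> w = 0"
    and cond_eta: "AE w in M. real_cond_exp M
          (vimage_algebra (space M) (\<lambda>w. (\<zeta> w, Z w, U w)) (borel \<Otimes>\<^sub>M (borel \<Otimes>\<^sub>M MU))) \<eta> w = 0"
    and Bnorm: "onorm (\<lambda>v. Bmat bXY bYX *v v) < 1"
    and moments: "\<And>j. integrable M (\<lambda>w. X w * X w * Z w $ j)"
                 "\<And>j. integrable M (\<lambda>w. X w * Y w * Z w $ j)"
                 "\<And>j. integrable M (\<lambda>w. Y w * Y w * Z w $ j)"
                 "\<And>j k. integrable M (\<lambda>w. Z w $ k * X w * Z w $ j)"
                 "\<And>j k. integrable M (\<lambda>w. Z w $ k * Y w * Z w $ j)"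
    and AorA': "assmA M Z Y (\<lambda>w. \<xi>Y (U w) + \<zeta> w) bYX piX piY (gammaX bXY bYX piX piY)
              \<or> assmA M Z X (\<lambda>w. \<xi>X (U w) + \<eta> w) bXY piY piX (gammaY bXY bYX piX piY)"
  shows "(let gX = gammaX bXY bYX piX piY; gY = gammaY bXY bYX piX piY;
              (bXY_I, bYX_I, V_I) = oPCH M Z X Y gX gY;
              (bYX_II, bXY_II, V_II) = oPCH M Z Y X gY gX
          in H_circ bXY_I bYX_I bXY_II bYX_II V_I V_II = Some (H_true bXY bYX))"
proof -
  interpret linear_sem M MU X Y \<zeta> \<eta> Z U \<xi>Y \<xi>X bXY bYX piX piY
    by (rule linear_sem.intro) (fact | rule det_I_minus_Bmat_nonzero[OF Bnorm])+
  obtain a1 a2 a3 where I: "oPCH M Z X Y gX gY = (a1, a2, a3)" by (metis prod_cases3)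
  obtain b1 b2 b3 where II: "oPCH M Z Y X gY gX = (b1, b2, b3)" by (metis prod_cases3)
  have "H_circ a1 a2 b2 b1 a3 b3 = Some (H_true bXY bYX)"
    using AorA' H_circ_eq_H_true_assmA[OF _ I II] H_circ_eq_H_true_assmA'[OF _ I II] by blast
  then show ?thesis using I II by (simp add: Let_def)
qed

end
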